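(* Let $\mathcal{K}\subseteq\mathbb{R}^n$ be a proper convex cone with a $\nu$-LHSCB $f$, and let $A\in\mathbb{R}^{m\times n}$ (full row rank), $\mathbf{b}\in\mathbb{R}^m$, $\mathbf{c}\in\mathbb{R}^n$. Let $\tau>0$, $0<\eta\le \frac14$, and let $(\mathbf{x},\mathbf{y},\mathbf{s})\in\mathcal{N}(\eta,\tau)$. Let $(\Delta\mathbf{x},\Delta\mathbf{y},\Delta\mathbf{s})$ be the solution of the Newton system at $(\mathbf{x},\mathbf{y},\mathbf{s})$ with parameter $\tau$, and set $(\mathbf{x}^+,\mathbf{y}^+,\mathbf{s}^+)=(\mathbf{x}+\Delta\mathbf{x},\mathbf{y}+\Delta\mathbf{y},\mathbf{s}+\Delta\mathbf{s})$. If $\vartheta=\frac{\eta/2}{\sqrt{\nu}+1}$, then $(\mathbf{x}^+,\mathbf{y}^+,\mathbf{s}^+)\in\mathcal{N}(\eta,\tau^+)$ with $\tau^+=(1-\vartheta)\tau$.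
   Context: $\mathcal{K}\subseteq\mathbb{R}^n$ is a proper (closed, convex, pointed, full-dimensional) cone with interior $\mathcal{K}^\circ$ and dual cone $\mathcal{K}^*=\{\mathbf{s}:\mathbf{s}^\top\mathbf{x}\ge 0\ \forall \mathbf{x}\in\mathcal{K}\}$. A $\nu$-LHSCB (logarithmically homogeneous self-concordant barrier with parameter $\nu$) for $\mathcal{K}$ is a strictly convex, three times differentiable $f:\mathcal{K}^\circ\to\mathbb{R}$ with $f(\mathbf{x})\to\infty$ as $\mathbf{x}$ approaches the boundary of $\mathcal{K}$, $|D^3f(\mathbf{x})[\mathbf{h},\mathbf{h},\mathbf{h}]|\le 2\,(D^2f(\mathbf{x})[\mathbf{h},\mathbf{h}])^{3/2}$ for all $\mathbf{x}\in\mathcal{K}^\circ,\mathbf{h}\in\mathbb{R}^n$, $\nu=\sup_{\mathbf{x}\in\mathcal{K}^\circ}g(\mathbf{x})^\top H(\mathbf{x})^{-1}g(\mathbf{x})<\infty$, and $f(t\mathbf{x})=f(\mathbf{x})-\nu\ln t$ for all $\mathbf{x}\in\mathcal{K}^\circ$, $t>0$; here $g$ and $H$ denote the gradient and Hessian of $f$. Local norms: $\|\mathbf{v}\|_{\mathbf{x}}=\sqrt{\mathbf{v}^\top H(\mathbf{x})\mathbf{v}}$ and $\|\mathbf{v}\|^*_{\mathbf{x}}=\sqrt{\mathbf{v}^\top H(\mathbf{x})^{-1}\mathbf{v}}$. The primal-dual pair is $\inf\{\mathbf{c}^\top\mathbf{x}: A\mathbf{x}=\mathbf{b},\mathbf{x}\in\mathcal{K}\}$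 and $\sup\{\mathbf{b}^\top\mathbf{y}: A^\top\mathbf{y}+\mathbf{s}=\mathbf{c},\mathbf{s}\in\mathcal{K}^*\}$. $\mathcal{F}^\circ=\{(\mathbf{x},\mathbf{y},\mathbf{s})\in\mathcal{K}^\circ\times\mathbb{R}^m\times(\mathcal{K}^* )^\circ: A\mathbf{x}=\mathbf{b},\ A^\top\mathbf{y}+\mathbf{s}=\mathbf{c}\}$. For $\eta,\tau>0$ the neighborhood is $\mathcal{N}(\eta,\tau)=\{(\mathbf{x},\mathbf{y},\mathbf{s})\in\mathcal{F}^\circ:\|\mathbf{s}+\tau g(\mathbf{x})\|^*_{\mathbf{x}}\le\eta\tau\}$. The Newton system at $(\mathbf{x},\mathbf{y},\mathbf{s})$ with parameter $\tau$ is: $A\Delta\mathbf{x}=\mathbf{0}$, $A^\top\Delta\mathbf{y}+\Delta\mathbf{s}=\mathbf{0}$, $\tau H(\mathbf{x})\Delta\mathbf{x}+\Delta\mathbf{s}=-(\mathbf{s}+\tau g(\mathbf{x}))$. *)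

theory Defs
  imports "HOL-Analysis.Analysis"
begin

definition proper_cone :: "(real^'n) set \<Rightarrow> bool" where
  "proper_cone K \<longleftrightarrow> closed K \<and> convex K \<and> cone K \<and> K \<noteq> {}
     \<and> (\<forall>x. x \<in> K \<and> - x \<in> K \<longrightarrow> x = 0) \<and> interior K \<noteq> {}"

definition dual_cone :: "(real^'n) set \<Rightarrow> (real^'n) set" where
  "dual_cone K = {s. \<forall>x\<in>K. s \<bullet> x \<ge> 0}"

definition strictly_convex_on :: "(real^'n) set \<Rightarrow> (real^'n \<Rightarrow> real) \<Rightarrow> bool" where
  "strictly_convex_on S f \<longleftrightarrow> (\<forall>x\<in>S. \<forall>y\<in>S. \<forall>t::real. x \<noteq> y \<and> 0 < t \<and> t < 1 \<longrightarrow>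
      f ((1 - t) *\<^sub>R x + t *\<^sub>R y) < (1 - t) * f x + t * f y)"

text \<open>nu-LHSCB f for K, with gradient g and Hessian H of f.
  The third derivative of f is the derivative H' of H:
  D^3 f(x)[h,h,h] = h . ((H' x h) *v h).\<close>
definition LHSCB :: "(real^'n) set \<Rightarrow> (real^'n \<Rightarrow> real) \<Rightarrow> (real^'n \<Rightarrow> real^'n)
     \<Rightarrow> (real^'n \<Rightarrow> real^'n^'n) \<Rightarrow> real \<Rightarrow> bool" where
  "LHSCB K f g H \<nu> \<longleftrightarrow>
     (\<forall>x\<in>interior K. (f has_derivative (\<lambda>h. g x \<bullet> h)) (at x))
   \<and> (\<forall>x\<in>interior K. (g has_derivative (\<lambda>h. H x *v h)) (at x))
   \<and> (\<exists>H'. \<forall>x\<in>interior K. (H has_derivative H' x) (at x)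
          \<and> (\<forall>h. \<bar>h \<bullet> (H' x h *v h)\<bar> \<le> 2 * (h \<bullet> (H x *v h)) powr (3/2)))
   \<and> strictly_convex_on (interior K) f
   \<and> (\<forall>p\<in>frontier K. filterlim f at_top (at p within interior K))
   \<and> (\<forall>x\<in>interior K. invertible (H x))
   \<and> bdd_above ((\<lambda>x. g x \<bullet> (matrix_inv (H x) *v g x)) ` interior K)
   \<and> \<nu> = (SUP x\<in>interior K. g x \<bullet> (matrix_inv (H x) *v g x))
   \<and> (\<forall>x\<in>interior K. \<forall>t>0. f (t *\<^sub>R x) = f x - \<nu> * ln t)"

definition dual_local_norm :: "(real^'n \<Rightarrow> real^'n^'n) \<Rightarrow> real^'n \<Rightarrow> real^'n \<Rightarrow> real" where
  "dual_local_norm H x v = sqrt (v \<bullet> (matrix_inv (H x) *v v))"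

definition strictly_feasible ::
  "(real^'n) set \<Rightarrow> real^'n^'m \<Rightarrow> real^'m \<Rightarrow> real^'n \<Rightarrow> ((real^'n) \<times> (real^'m) \<times> (real^'n)) set" where
  "strictly_feasible K A b c = {(x, y, s). x \<in> interior K \<and> s \<in> interior (dual_cone K)
      \<and> A *v x = b \<and> transpose A *v y + s = c}"

definition nbhd ::
  "(real^'n) set \<Rightarrow> (real^'n \<Rightarrow> real^'n) \<Rightarrow> (real^'n \<Rightarrow> real^'n^'n) \<Rightarrow>
   real^'n^'m \<Rightarrow> real^'m \<Rightarrow> real^'n \<Rightarrow> real \<Rightarrow> real \<Rightarrow> ((real^'n) \<times> (real^'m) \<times> (real^'n)) set" where
  "nbhd K g H A b c \<eta> \<tau> = {(x, y, s). (x, y, s) \<in> strictly_feasible K A b c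
      \<and> dual_local_norm H x (s + \<tau> *\<^sub>R g x) \<le> \<eta> * \<tau>}"

end

theory Submission
  imports Defs
begin

text \<open>
  Write \<open>\<parallel>v\<parallel>\<^bsub>x\<^esub>\<close> and \<open>\<parallel>v\<parallel>\<^sup>*\<^bsub>x\<^esub>\<close> for the local norm and its dual, and \<open>r = \<parallel>\<Delta>x\<parallel>\<^bsub>x\<^esub>\<close>.
  Since \<open>A \<Delta>x = 0\<close> and \<open>\<Delta>s\<close> lies in the range of \<open>A\<^sup>T\<close>, the two parts of the Newton residual
  \<open>\<tau> H(x) \<Delta>x + \<Delta>s = -(s + \<tau> g(x))\<close> are orthogonal, so \<open>\<tau> r \<le> \<parallel>s + \<tau> g(x)\<parallel>\<^sup>*\<^bsub>x\<^esub> \<le> \<eta> \<tau>\<close>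
  and \<open>r \<le> \<eta> \<le> 1/4\<close>. Self-concordance makes \<open>1 / \<parallel>h\<parallel>\<^bsub>x + t h\<^esub>\<close> 1-Lipschitz in \<open>t\<close>; this gives the
  Dikin ellipsoid \<open>x\<^sup>+ \<in> interior K\<close> and, with Banach's bound for the symmetric third derivative,
  the comparison \<open>(1 - t r)\<^sup>2 H(x) \<le> H(x + t \<Delta>x) \<le> H(x) / (1 - t r)\<^sup>2\<close>.
  Integrating, the gradient remainder \<open>e = g(x\<^sup>+) - g(x) - H(x) \<Delta>x\<close> has \<open>\<parallel>e\<parallel>\<^sup>*\<^bsub>x\<^sup>+\<^esub> \<le> r\<^sup>2 / (1 - r)\<^sup>2\<close>.
  The new residual is \<open>s\<^sup>+ + \<tau>\<^sup>+ g(x\<^sup>+) = \<tau> e - \<vartheta> \<tau> g(x\<^sup>+)\<close>, and logarithmic homogeneity gives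
  \<open>\<parallel>g(x\<^sup>+)\<parallel>\<^sup>*\<^bsub>x\<^sup>+\<^esub> = \<surd>\<nu>\<close>; the choice of \<open>\<vartheta>\<close> makes the sum at most \<open>\<eta> \<tau>\<^sup>+\<close>. Finally
  \<open>-g(y) \<bullet> z \<ge> \<parallel>z\<parallel>\<^bsub>y\<^esub>\<close> for \<open>z \<in> K\<close>, so any \<open>s\<close> with \<open>\<parallel>s + \<mu> g(y)\<parallel>\<^sup>*\<^bsub>y\<^esub> < \<mu>\<close> lies in the interior
  of the dual cone.
\<close>

section \<open>Quadratic forms of symmetric matrices\<close>

lemma symmetric_matrix_inner_commute:
  fixes M :: "real^'n^'n"
  assumes "transpose M = M"
  shows "a \<bullet> (M *v b) = b \<bullet> (M *v a)"
  by (metis dot_lmul_matrix inner_commute transpose_matrix_vector assms)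

lemma symmetric_matrixI:
  fixes M :: "real^'n^'n"
  assumes "\<And>u v. u \<bullet> (M *v v) = v \<bullet> (M *v u)"
  shows "transpose M = M"
proof -
  have entry: "M $ i $ j = axis i 1 \<bullet> (M *v axis j 1)" for i j
    by (simp add: matrix_vector_mult_basis inner_axis' column_def)
  have "transpose M $ i $ j = M $ i $ j" for i j
    using entry[of j i] entry[of i j] assms[of "axis j 1" "axis i 1"] by (simp add: transpose_def)
  then show ?thesis by (simp add: vec_eq_iff)
qed

lemma symmetric_form_add_scaleR:
  fixes M :: "real^'n^'n"
  assumes "transpose M = M"
  shows "(a + t *\<^sub>R b) \<bullet> (M *v (a + t *\<^sub>R b))
       = a \<bullet> (M *v a) + 2 * t * (a \<bullet> (M *v b)) + t^2 * (b \<bullet> (M *v b))"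
  using symmetric_matrix_inner_commute[OF assms, of b a]
  by (simp add: power2_eq_square algebra_simps)

lemma form_scaleR:
  fixes M :: "real^'n^'n"
  shows "(t *\<^sub>R a) \<bullet> (M *v (t *\<^sub>R a)) = t^2 * (a \<bullet> (M *v a))"
  by (simp add: matrix_vector_mult_scaleR power2_eq_square)

lemma linear_le_quadratic_imp_zero:
  fixes D C :: real
  assumes "\<And>t. t * D \<le> C * t^2"
  shows "D = 0"
proof (rule ccontr)
  assume "D \<noteq> 0"
  define t where "t = D / (\<bar>C\<bar> + 1)"
  have "t^2 > 0" using \<open>D \<noteq> 0\<close> by (simp add: t_def add_pos_nonneg)
  have "C * t^2 \<le> \<bar>C\<bar> * t^2" by (intro mult_right_mono) auto
  also have "\<dots> < (\<bar>C\<bar> + 1) * t^2" using \<open>t^2 > 0\<close> by (simp add: distrib_right)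
  also have "\<dots> = t * D" by (simp add: t_def power2_eq_square)
  finally show False using assms[of t] by simp
qed

lemma psd_form_cauchy_schwarz:
  fixes M :: "real^'n^'n"
  assumes sym: "transpose M = M" and psd: "\<And>v. 0 \<le> v \<bullet> (M *v v)"
  shows "(a \<bullet> (M *v b))^2 \<le> (a \<bullet> (M *v a)) * (b \<bullet> (M *v b))"
proof -
  let ?A = "a \<bullet> (M *v a)" and ?B = "a \<bullet> (M *v b)" and ?C = "b \<bullet> (M *v b)"
  have quadratic_nonneg: "0 \<le> ?A + 2 * t * ?B + t^2 * ?C" for t
    using psd[of "a + t *\<^sub>R b"] symmetric_form_add_scaleR[OF sym] by simp
  show ?thesis
  proof (cases "?C = 0")
    case True
    have "?B = 0"
    proof (rule ccontr)
      assume "?B \<noteq> 0"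
      have "0 \<le> ?A + 2 * (- (?A + 1) / (2 * ?B)) * ?B"
        using quadratic_nonneg[of "- (?A + 1) / (2 * ?B)"] True by simp
      also have "\<dots> = - 1" using \<open>?B \<noteq> 0\<close> by (simp add: field_simps)
      finally show False by simp
    qed
    then show ?thesis using True by simp
  next
    case False
    then have C: "?C > 0" using psd[of b] by simp
    have "0 \<le> ?A + 2 * (- ?B / ?C) * ?B + (- ?B / ?C)^2 * ?C" by (rule quadratic_nonneg)
    also have "\<dots> = ?A - ?B^2 / ?C" using C by (simp add: field_simps power2_eq_square)
    finally show ?thesis using C by (simp add: field_simps)
  qed
qed

lemma psd_form_cauchy_schwarz_sqrt:
  fixes M :: "real^'n^'n"
  assumes "transpose M = M" and "\<And>v. 0 \<le> v \<bullet> (M *v v)"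
  shows "\<bar>a \<bullet> (M *v b)\<bar> \<le> sqrt (a \<bullet> (M *v a)) * sqrt (b \<bullet> (M *v b))"
proof -
  have "\<bar>a \<bullet> (M *v b)\<bar>^2 \<le> (a \<bullet> (M *v a)) * (b \<bullet> (M *v b))"
    using psd_form_cauchy_schwarz[OF assms, of a b] by simp
  then have "\<bar>a \<bullet> (M *v b)\<bar> \<le> sqrt ((a \<bullet> (M *v a)) * (b \<bullet> (M *v b)))"
    by (rule real_le_rsqrt)
  then show ?thesis by (simp add: real_sqrt_mult)
qed

lemma psd_form_sqrt_triangle:
  fixes M :: "real^'n^'n"
  assumes sym: "transpose M = M" and psd: "\<And>v. 0 \<le> v \<bullet> (M *v v)"
  shows "sqrt ((a + b) \<bullet> (M *v (a + b))) \<le> sqrt (a \<bullet> (M *v a)) + sqrt (b \<bullet> (M *v b))"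
proof -
  have "(a + b) \<bullet> (M *v (a + b)) = a \<bullet> (M *v a) + 2 * (a \<bullet> (M *v b)) + b \<bullet> (M *v b)"
    using symmetric_form_add_scaleR[OF sym, of a 1 b] by simp
  also have "\<dots> \<le> a \<bullet> (M *v a) + 2 * (sqrt (a \<bullet> (M *v a)) * sqrt (b \<bullet> (M *v b))) + b \<bullet> (M *v b)"
    using psd_form_cauchy_schwarz_sqrt[OF sym psd, of a b] by simp
  also have "\<dots> = (sqrt (a \<bullet> (M *v a)) + sqrt (b \<bullet> (M *v b)))^2"
    using psd[of a] psd[of b] by (simp add: power2_eq_square algebra_simps)
  finally show ?thesis
    using psd[of a] psd[of b] by (simp add: real_le_lsqrt)
qed

lemma sqrt_mult_add_le:
  fixes a1 a2 b1 b2 :: real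
  assumes "a1 \<ge> 0" "a2 \<ge> 0" "b1 \<ge> 0" "b2 \<ge> 0"
  shows "sqrt a1 * sqrt b1 + sqrt a2 * sqrt b2 \<le> sqrt ((a1 + a2) * (b1 + b2))"
proof (rule real_le_rsqrt)
  have "(sqrt a1 * sqrt b1 + sqrt a2 * sqrt b2)^2 + (sqrt a1 * sqrt b2 - sqrt a2 * sqrt b1)^2
      = (a1 + a2) * (b1 + b2)"
    using assms by (simp add: power2_eq_square algebra_simps)
  then show "(sqrt a1 * sqrt b1 + sqrt a2 * sqrt b2)^2 \<le> (a1 + a2) * (b1 + b2)"
    by (metis le_add_same_cancel1 zero_le_power2)
qed

text \<open>\<open>D\<close> is half the difference of the positive semidefinite forms \<open>c M + D\<close> and \<open>c M - D\<close>;
  apply Cauchy-Schwarz to each.\<close>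
lemma symmetric_form_bound_by_psd:
  fixes M D :: "real^'n^'n"
  assumes symM: "transpose M = M" and psdM: "\<And>v. 0 \<le> v \<bullet> (M *v v)"
    and symD: "transpose D = D" and c: "c \<ge> 0"
    and bound: "\<And>u. \<bar>u \<bullet> (D *v u)\<bar> \<le> c * (u \<bullet> (M *v u))"
  shows "\<bar>u \<bullet> (D *v v)\<bar> \<le> c * sqrt (u \<bullet> (M *v u)) * sqrt (v \<bullet> (M *v v))"
proof -
  define P where "P = c *\<^sub>R M - D"
  define N where "N = c *\<^sub>R M + D"
  have Pv: "P *v w = c *\<^sub>R (M *v w) - D *v w" for w
    by (simp add: P_def matrix_vector_mult_diff_rdistrib scaleR_matrix_vector_assoc)
  have Nv: "N *v w = c *\<^sub>R (M *v w) + D *v w" for w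
    by (simp add: N_def matrix_vector_mult_add_rdistrib scaleR_matrix_vector_assoc)
  note commute = symmetric_matrix_inner_commute[OF symM] symmetric_matrix_inner_commute[OF symD]
  have symP: "transpose P = P"
    by (rule symmetric_matrixI) (simp add: Pv inner_diff_right commute)
  have symN: "transpose N = N"
    by (rule symmetric_matrixI) (simp add: Nv inner_add_right commute)
  have psdP: "0 \<le> w \<bullet> (P *v w)" for w
    using bound[of w] by (simp add: Pv inner_diff_right abs_le_iff)
  have psdN: "0 \<le> w \<bullet> (N *v w)" for w
    using bound[of w] by (simp add: Nv inner_add_right abs_le_iff)
  have sum_form: "w \<bullet> (N *v w) + w \<bullet> (P *v w) = (2 * c) * (w \<bullet> (M *v w))" for w
    by (simp add: Nv Pv inner_add_right inner_diff_right)
  have "u \<bullet> (D *v v) = (u \<bullet> (N *v v) - u \<bullet> (P *v v)) / 2"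
    by (simp add: Nv Pv inner_add_right inner_diff_right)
  then have "\<bar>u \<bullet> (D *v v)\<bar> \<le> (\<bar>u \<bullet> (N *v v)\<bar> + \<bar>u \<bullet> (P *v v)\<bar>) / 2" by simp
  also have "\<dots> \<le> (sqrt (u \<bullet> (N *v u)) * sqrt (v \<bullet> (N *v v))
                  + sqrt (u \<bullet> (P *v u)) * sqrt (v \<bullet> (P *v v))) / 2"
    using psd_form_cauchy_schwarz_sqrt[OF symN psdN, of u v]
      psd_form_cauchy_schwarz_sqrt[OF symP psdP, of u v] by simp
  also have "\<dots> \<le> sqrt (((2 * c) * (u \<bullet> (M *v u))) * ((2 * c) * (v \<bullet> (M *v v)))) / 2"
    using sqrt_mult_add_le[OF psdN[of u] psdP[of u] psdN[of v] psdP[of v]]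
    unfolding sum_form by simp
  also have "\<dots> = c * sqrt (u \<bullet> (M *v u)) * sqrt (v \<bullet> (M *v v))"
    using c by (simp add: real_sqrt_mult)
  finally show ?thesis .
qed

lemma pd_form_coercive:
  fixes M :: "real^'n^'n"
  assumes pd: "\<And>v. v \<noteq> 0 \<Longrightarrow> 0 < v \<bullet> (M *v v)"
  obtains l where "l > 0" "\<And>v. l * (norm v)^2 \<le> v \<bullet> (M *v v)"
proof -
  obtain u :: "real^'n" where "norm u = 1" using vector_choose_size[of 1] by auto
  then have "sphere (0::real^'n) 1 \<noteq> {}" by auto
  moreover have "continuous_on (sphere 0 1) (\<lambda>v::real^'n. v \<bullet> (M *v v))"
    by (intro continuous_intros)
  ultimately obtain v0 where v0: "v0 \<in> sphere 0 1"
    and min: "\<forall>v\<in>sphere 0 1. v0 \<bullet> (M *v v0) \<le> v \<bullet> (M *v v)"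
    using continuous_attains_inf[OF compact_sphere] by blast
  have "v0 \<bullet> (M *v v0) * (norm v)^2 \<le> v \<bullet> (M *v v)" for v
  proof (cases "v = 0")
    case False
    then have "v0 \<bullet> (M *v v0) \<le> ((1 / norm v) *\<^sub>R v) \<bullet> (M *v ((1 / norm v) *\<^sub>R v))"
      using min by (simp del: inner_scaleR_left inner_scaleR_right)
    also have "\<dots> = (v \<bullet> (M *v v)) / (norm v)^2"
      by (simp only: form_scaleR power_divide) simp
    finally show ?thesis using False by (simp add: field_simps)
  qed simp
  moreover have "v0 \<bullet> (M *v v0) > 0" using pd v0 by (metis mem_sphere_0 norm_zero zero_neq_one)
  ultimately show ?thesis using that by blast
qed

lemma matrix_inv_mult:
  fixes M :: "real^'n^'n"
  assumes "invertible M"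
  shows "M ** matrix_inv M = mat 1" and "matrix_inv M ** M = mat 1"
proof -
  have "\<exists>M'. M ** M' = mat 1 \<and> M' ** M = mat 1" using assms by (simp add: invertible_def)
  then have "M ** matrix_inv M = mat 1 \<and> matrix_inv M ** M = mat 1"
    unfolding matrix_inv_def by (rule someI_ex)
  then show "M ** matrix_inv M = mat 1" and "matrix_inv M ** M = mat 1" by auto
qed

lemma matrix_inv_cancel:
  fixes M :: "real^'n^'n"
  assumes "invertible M"
  shows "M *v (matrix_inv M *v v) = v" and "matrix_inv M *v (M *v v) = v"
  using matrix_inv_mult[OF assms] by (simp_all add: matrix_vector_mul_assoc)

lemma symmetric_matrix_inv:
  fixes M :: "real^'n^'n"
  assumes sym: "transpose M = M" and inv: "invertible M"
  shows "transpose (matrix_inv M) = matrix_inv M"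
proof -
  let ?P = "matrix_inv M"
  have "transpose ?P ** M = mat 1"
    using arg_cong[OF matrix_inv_mult(1)[OF inv], of transpose]
    by (simp add: matrix_transpose_mul sym)
  have "transpose ?P = transpose ?P ** (M ** ?P)"
    using matrix_inv_mult[OF inv] by simp
  also have "\<dots> = ?P"
    using \<open>transpose ?P ** M = mat 1\<close> by (simp add: matrix_mul_assoc)
  finally show ?thesis .
qed

lemma matrix_inv_psd:
  fixes M :: "real^'n^'n"
  assumes "invertible M" and "\<And>v. 0 \<le> v \<bullet> (M *v v)"
  shows "0 \<le> v \<bullet> (matrix_inv M *v v)"
  using assms(2)[of "matrix_inv M *v v"]
  by (simp add: matrix_inv_cancel[OF assms(1)] inner_commute)

lemma inner_le_form_dual_form:
  fixes M :: "real^'n^'n"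
  assumes sym: "transpose M = M" and psd: "\<And>v. 0 \<le> v \<bullet> (M *v v)" and inv: "invertible M"
  shows "\<bar>w \<bullet> v\<bar> \<le> sqrt (w \<bullet> (M *v w)) * sqrt (v \<bullet> (matrix_inv M *v v))"
proof -
  let ?P = "matrix_inv M"
  have "(M *v w) \<bullet> (?P *v v) = w \<bullet> v"
    using symmetric_matrix_inner_commute[OF sym, of "?P *v v" w]
    by (simp add: matrix_inv_cancel[OF inv] inner_commute)
  moreover have "(M *v w) \<bullet> (?P *v (M *v w)) = w \<bullet> (M *v w)"
    by (simp add: matrix_inv_cancel[OF inv] inner_commute)
  ultimately show ?thesis
    using psd_form_cauchy_schwarz_sqrt[OF symmetric_matrix_inv[OF sym inv]
        matrix_inv_psd[OF inv psd], of "M *v w" v] by simp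
qed

section \<open>Symmetric trilinear forms\<close>

locale symmetric_trilinear_form =
  fixes M :: "real^'n^'n" and L :: "real^'n \<Rightarrow> real^'n^'n"
  assumes M_symmetric: "transpose M = M"
    and M_pos: "\<And>v. v \<noteq> 0 \<Longrightarrow> 0 < v \<bullet> (M *v v)"
    and L_linear: "linear L"
    and L_swap: "\<And>a b c. b \<bullet> (L a *v c) = a \<bullet> (L b *v c)"
    and L_symmetric: "\<And>a. transpose (L a) = L a"
begin

abbreviation Q :: "real^'n \<Rightarrow> real" where "Q v \<equiv> v \<bullet> (M *v v)"
abbreviation B :: "real^'n \<Rightarrow> real^'n \<Rightarrow> real" where "B a b \<equiv> a \<bullet> (M *v b)"
abbreviation T :: "real^'n \<Rightarrow> real^'n \<Rightarrow> real^'n \<Rightarrow> real" where "T a b c \<equiv> b \<bullet> (L a *v c)"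

lemma Q_nonneg: "0 \<le> Q v"
  using M_pos[of v] by (cases "v = 0") auto

lemma B_commute: "B a b = B b a"
  by (rule symmetric_matrix_inner_commute[OF M_symmetric])

lemma Q_add_scaleR: "Q (a + t *\<^sub>R b) = Q a + 2 * t * B a b + t^2 * Q b"
  by (rule symmetric_form_add_scaleR[OF M_symmetric])

lemma Q_normalize: "v \<noteq> 0 \<Longrightarrow> Q ((1 / sqrt (Q v)) *\<^sub>R v) = 1"
  using M_pos[of v] by (simp only: form_scaleR) (simp add: power_divide)

lemma B_unit_bounds:
  assumes "Q x = 1" "Q y = 1"
  shows "- 1 \<le> B x y" and "B x y \<le> 1"
proof -
  have "(B x y)^2 \<le> 1"
    using psd_form_cauchy_schwarz[OF M_symmetric Q_nonneg, of x y] assms by simp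
  then show "- 1 \<le> B x y" and "B x y \<le> 1"
    using abs_square_le_1 by (auto simp: abs_le_iff)
qed

lemma T_swap23: "T a b c = T a c b"
  by (rule symmetric_matrix_inner_commute[OF L_symmetric])

lemma T_add_scaleR_left: "T (a + t *\<^sub>R a') b c = T a b c + t * T a' b c"
  by (simp add: linear_add[OF L_linear] linear_scale[OF L_linear] matrix_vector_mult_add_rdistrib
      scaleR_matrix_vector_assoc[symmetric] inner_add_right)

lemma T_zero_left: "T 0 b c = 0"
  by (simp add: linear_0[OF L_linear])

lemma T_scaleR_left: "T (t *\<^sub>R a) b c = t * T a b c"
  using T_add_scaleR_left[where a=0 and t=t and a'=a and b=b and c=c] by (simp add: T_zero_left)

lemma T_add_scaleR:
  "T a (b + t *\<^sub>R c) (b + t *\<^sub>R c) = T a b b + 2 * t * T a b c + t^2 * T a c c"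
  using T_swap23[where a=a and b=c and c=b]
  by (simp add: power2_eq_square algebra_simps)

lemma T_scaleR: "T a (t *\<^sub>R b) (t *\<^sub>R b) = t^2 * T a b b"
  using T_add_scaleR[where a=a and b=0 and t=t and c=b] by simp

lemma exists_trilinear_max:
  obtains m where "\<And>a b. Q a = 1 \<Longrightarrow> Q b = 1 \<Longrightarrow> T b a a \<le> m"
    and "\<exists>x y. Q x = 1 \<and> Q y = 1 \<and> T y x x = m"
proof -
  define S where "S = {v. Q v = 1}"
  obtain l where l: "l > 0" "\<And>v. l * (norm v)^2 \<le> Q v" using pd_form_coercive[OF M_pos] by blast
  have "norm v \<le> sqrt (1 / l)" if "v \<in> S" for v
    using l(2)[of v] that l(1) by (simp add: S_def real_le_rsqrt field_simps)
  then have "bounded S" unfolding bounded_iff by blast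
  moreover have "closed S" unfolding S_def by (intro closed_Collect_eq continuous_intros)
  ultimately have "compact (S \<times> S)" by (intro compact_Times) (auto simp: compact_eq_bounded_closed)
  moreover obtain u :: "real^'n" where "u \<noteq> 0"
    using vector_choose_size[of 1] by force
  then have "S \<times> S \<noteq> {}" using Q_normalize[OF \<open>u \<noteq> 0\<close>] unfolding S_def by blast
  moreover have "continuous_on (S \<times> S) (\<lambda>p. T (snd p) (fst p) (fst p))"
  proof -
    have "continuous_on UNIV L"
      using L_linear by (simp add: linear_continuous_on linear_conv_bounded_linear)
    then have "continuous_on (S \<times> S) (\<lambda>p. L (snd p))"
      by (rule continuous_on_compose2[OF _ continuous_on_snd]) auto
    then show ?thesis unfolding matrix_vector_mult_def by (intro continuous_intros)
  qed
  ultimately obtain p where "p \<in> S \<times> S"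
    and "\<forall>p'\<in>S \<times> S. T (snd p') (fst p') (fst p') \<le> T (snd p) (fst p) (fst p)"
    using continuous_attains_sup by blast
  then show ?thesis using that[of "T (snd p) (fst p) (fst p)"] by (force simp: S_def)
qed

end

text \<open>A maximiser \<open>(x, y)\<close> of \<open>T y x x\<close> over pairs of unit vectors satisfies first-order
  conditions in both arguments; they let us replace the pair by a new maximiser whose
  components are closer to each other, and in the limit the maximum is attained on the diagonal.\<close>
locale symmetric_trilinear_form_max = symmetric_trilinear_form +
  fixes m :: real
  assumes le_max: "Q a = 1 \<Longrightarrow> Q b = 1 \<Longrightarrow> T b a a \<le> m"
    and max_attained: "\<exists>x y. Q x = 1 \<and> Q y = 1 \<and> T y x x = m"
begin

lemma max_nonneg: "0 \<le> m"
proof -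
  obtain x y where xy: "Q x = 1" "Q y = 1" using max_attained by blast
  then have "T (- y) x x \<le> m" "T y x x \<le> m" using le_max[of x]
    by (auto simp: form_scaleR[of "- 1", simplified])
  then show ?thesis using T_scaleR_left[where t="- 1" and a=y and b=x and c=x] by simp
qed

lemma le_max_homogeneous: "T b a a \<le> m * Q a * sqrt (Q b)"
proof (cases "a = 0 \<or> b = 0")
  case True
  then show ?thesis using T_zero_left T_scaleR[where a=b and t=0 and b=a] by auto
next
  case False
  then have qa: "Q a > 0" and qb: "Q b > 0" using M_pos by auto
  have "T ((1 / sqrt (Q b)) *\<^sub>R b) ((1 / sqrt (Q a)) *\<^sub>R a) ((1 / sqrt (Q a)) *\<^sub>R a) \<le> m"
    using le_max Q_normalize False by blast
  also have "T ((1 / sqrt (Q b)) *\<^sub>R b) ((1 / sqrt (Q a)) *\<^sub>R a) ((1 / sqrt (Q a)) *\<^sub>R a)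
      = T b a a / (Q a * sqrt (Q b))"
    using qa qb by (simp only: T_scaleR_left T_scaleR) (simp add: power_divide)
  finally show ?thesis using qa qb by (simp add: field_simps)
qed

lemma maximizer_stationary_left:
  assumes xy: "Q x = 1" "Q y = 1" "T y x x = m"
  shows "T v x x = m * B y v"
proof -
  have "t * (T v x x - m * B y v) \<le> (m * Q v / 2) * t^2" for t
  proof -
    have "T (y + t *\<^sub>R v) x x \<le> m * Q x * sqrt (Q (y + t *\<^sub>R v))" by (rule le_max_homogeneous)
    also have "\<dots> = m * sqrt (Q (y + t *\<^sub>R v))" using xy by simp
    also have "\<dots> \<le> m * ((1 + Q (y + t *\<^sub>R v)) / 2)"
      using arith_geo_mean_sqrt[OF zero_le_one Q_nonneg, of "y + t *\<^sub>R v"] max_nonneg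
      by (intro mult_left_mono) auto
    also have "\<dots> = m + m * t * B y v + (m * Q v / 2) * t^2"
      using xy by (simp only: Q_add_scaleR) (simp add: algebra_simps)
    finally show ?thesis using T_add_scaleR_left[where a=y and t=t and a'=v and b=x and c=x] xy
      by (simp add: algebra_simps)
  qed
  then have "T v x x - m * B y v = 0" by (rule linear_le_quadratic_imp_zero)
  then show ?thesis by simp
qed

lemma maximizer_stationary_right:
  assumes xy: "Q x = 1" "Q y = 1" "T y x x = m"
  shows "T y x v = m * B x v"
proof -
  have "t * (2 * T y x v - 2 * m * B x v) \<le> (m * Q v - T y v v) * t^2" for t
  proof -
    have "T y (x + t *\<^sub>R v) (x + t *\<^sub>R v) \<le> m * Q (x + t *\<^sub>R v) * sqrt (Q y)"
      by (rule le_max_homogeneous)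
    also have "\<dots> = m + 2 * t * m * B x v + m * Q v * t^2"
      using xy by (simp only: Q_add_scaleR) (simp add: algebra_simps)
    finally show ?thesis using T_add_scaleR[where a=y and b=x and t=t and c=v] xy
      by (simp add: algebra_simps)
  qed
  then have "2 * T y x v - 2 * m * B x v = 0" by (rule linear_le_quadratic_imp_zero)
  then show ?thesis by simp
qed

lemma maximizer_diagonal:
  assumes "Q x = 1" "Q y = 1" "T y x x = m"
  shows "T x x x = m * B x y"
  using maximizer_stationary_left[OF assms, of x] B_commute by simp

text \<open>The normalised midpoint \<open>z\<close> of \<open>x\<close> and \<open>y\<close> pairs with \<open>x\<close> to a maximiser whose cosine is
  the half-angle cosine of the old one.\<close>
lemma maximizer_bisect:
  assumes xy: "Q x = 1" "Q y = 1" "T y x x = m" and c: "B x y > - 1"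
  obtains z where "Q z = 1" "T x z z = m" "B z x = sqrt ((1 + B x y) / 2)"
proof -
  define c where "c = B x y"
  have pos: "2 + 2 * c > 0" using c by (simp add: c_def)
  have Qxy: "Q (x + y) = 2 + 2 * c"
    using Q_add_scaleR[where a=x and t=1 and b=y] xy by (simp add: c_def)
  define z where "z = (1 / sqrt (2 + 2 * c)) *\<^sub>R (x + y)"
  have "Q z = 1" using Qxy pos by (simp only: z_def form_scaleR) (simp add: power_divide)
  have "T x x y = m"
    using xy(3) T_swap23[where a=x and b=x and c=y] L_swap[where a=x and b=y and c=x] by simp
  moreover have "T x y y = m * c"
    using maximizer_stationary_right[OF xy, of y] L_swap[where a=x and b=y and c=y]
    by (simp add: c_def)
  moreover have "T x x x = m * c" using maximizer_diagonal[OF xy] by (simp add: c_def)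
  ultimately have "T x (x + y) (x + y) = m * (2 + 2 * c)"
    using T_add_scaleR[where a=x and b=x and t=1 and c=y] by (simp add: algebra_simps)
  then have "T x z z = m"
    using pos by (simp only: z_def T_scaleR) (simp add: power_divide)
  have "B z x = (1 + c) / sqrt (2 + 2 * c)"
    using xy B_commute[where a=y and b=x] by (simp add: z_def inner_add_left c_def)
  also have "\<dots> = sqrt ((1 + c) / 2)"
  proof -
    have "sqrt (2 + 2 * c) = sqrt 2 * sqrt (1 + c)"
      by (simp add: real_sqrt_mult[symmetric] algebra_simps)
    then have "(1 + c) / sqrt (2 + 2 * c) = ((1 + c) / sqrt (1 + c)) / sqrt 2"
      by (simp add: field_simps)
    also have "\<dots> = sqrt ((1 + c) / 2)" using pos by (simp add: real_div_sqrt real_sqrt_divide)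
    finally show ?thesis .
  qed
  finally show ?thesis using that \<open>Q z = 1\<close> \<open>T x z z = m\<close> by (simp add: c_def)
qed

lemma maximizer_nearly_aligned:
  assumes "Q x = 1" "Q y = 1" "T y x x = m" "B x y > - 1"
  shows "\<exists>x' y'. Q x' = 1 \<and> Q y' = 1 \<and> T y' x' x' = m \<and> B x' y' > - 1 \<and> 1 - B x' y' \<le> 2 / 2^k"
proof (induction k)
  case 0
  have "Q x = 1 \<and> Q y = 1 \<and> T y x x = m \<and> B x y > - 1 \<and> 1 - B x y \<le> 2 / 2^0"
    using assms B_unit_bounds(1)[OF assms(1,2)] by simp
  then show ?case by blast
next
  case (Suc k)
  then obtain x y where xy: "Q x = 1" "Q y = 1" "T y x x = m" "B x y > - 1" "1 - B x y \<le> 2 / 2^k"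
    by blast
  obtain z where z: "Q z = 1" "T x z z = m" "B z x = sqrt ((1 + B x y) / 2)"
    using maximizer_bisect[OF xy(1-4)] .
  define q where "q = (1 + B x y) / 2"
  have q01: "0 \<le> q" "q \<le> 1" using B_unit_bounds[OF xy(1,2)] by (auto simp: q_def)
  then have "q \<le> sqrt q" by (simp add: real_le_rsqrt power2_eq_square mult_left_le)
  then have "1 - B z x \<le> (1 - B x y) / 2" using z by (simp add: q_def field_simps)
  also have "\<dots> \<le> 2 / 2^(Suc k)" using xy(5) by simp
  finally have "1 - B z x \<le> 2 / 2^(Suc k)" .
  moreover have "B z x > - 1"
    using z real_sqrt_ge_zero[OF q01(1)] unfolding q_def by linarith
  ultimately have "Q z = 1 \<and> Q x = 1 \<and> T x z z = m \<and> B z x > - 1 \<and> 1 - B z x \<le> 2 / 2^(Suc k)"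
    using z xy(1) by simp
  then show ?case by blast
qed

lemma max_le:
  assumes diagonal: "\<And>v. Q v = 1 \<Longrightarrow> \<bar>T v v v\<bar> \<le> C"
  shows "m \<le> C"
proof -
  obtain x0 y0 where x0y0: "Q x0 = 1" "Q y0 = 1" "T y0 x0 x0 = m"
    using max_attained by blast
  show ?thesis
  proof (cases "B x0 y0 = - 1")
    case True
    then show ?thesis using maximizer_diagonal[OF x0y0] diagonal[of x0] x0y0 by simp
  next
    case False
    then have "B x0 y0 > - 1" using B_unit_bounds[OF x0y0(1,2)] by simp
    have "m - C \<le> m * (2 / 2^k)" for k
    proof -
      obtain x y where xy: "Q x = 1" "Q y = 1" "T y x x = m" "1 - B x y \<le> 2 / 2^k"
        using maximizer_nearly_aligned[OF x0y0 \<open>B x0 y0 > - 1\<close>, of k] by blast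
      have "m * B x y \<le> C" using maximizer_diagonal[OF xy(1-3)] diagonal[of x] xy by simp
      moreover have "m * (1 - B x y) \<le> m * (2 / 2^k)" using xy(4) max_nonneg
        by (rule mult_left_mono)
      ultimately show ?thesis by (simp add: algebra_simps)
    qed
    moreover have "(\<lambda>k. m * (2 / 2^k)) \<longlonglongrightarrow> 0"
      by (intro tendsto_mult_right_zero LIMSEQ_divide_realpow_zero) simp
    ultimately have "m - C \<le> 0" by (intro LIMSEQ_le_const[of _ 0]) auto
    then show ?thesis by simp
  qed
qed

end

context symmetric_trilinear_form
begin

text \<open>Banach's theorem for symmetric trilinear forms: a bound on the diagonal extends to all
  arguments.\<close>
theorem trilinear_bound:
  assumes diagonal: "\<And>v. \<bar>T v v v\<bar> \<le> C * Q v powr (3/2)"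
  shows "\<bar>T a b b\<bar> \<le> C * sqrt (Q a) * Q b"
proof -
  obtain m where "\<And>a b. Q a = 1 \<Longrightarrow> Q b = 1 \<Longrightarrow> T b a a \<le> m"
    and "\<exists>x y. Q x = 1 \<and> Q y = 1 \<and> T y x x = m"
    using exists_trilinear_max by blast
  then interpret symmetric_trilinear_form_max M L m by unfold_locales
  have "m \<le> C"
  proof (rule max_le)
    fix v assume "Q v = 1"
    then show "\<bar>T v v v\<bar> \<le> C" using diagonal[of v] by simp
  qed
  have "T a b b \<le> C * sqrt (Q a) * Q b" for a
  proof -
    have "T a b b \<le> m * (Q b * sqrt (Q a))" using le_max_homogeneous by (simp add: mult.assoc)
    also have "\<dots> \<le> C * (Q b * sqrt (Q a))" using \<open>m \<le> C\<close> Q_nonneg by (simp add: mult_right_mono)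
    finally show ?thesis by (simp add: algebra_simps)
  qed
  from this[of a] this[of "- a"] show ?thesis
    using T_scaleR_left[where t="- 1" and a=a] form_scaleR[where t="- 1" and a=a] by simp
qed

end

section \<open>Calculus on lines\<close>

lemma bounded_linear_matrix_vector_mult_left: "bounded_linear (\<lambda>M::real^'n^'m. M *v c)"
  by (simp add: linear_conv_bounded_linear[symmetric] linearI matrix_vector_mult_add_rdistrib
      scaleR_matrix_vector_assoc)

lemma has_derivative_along_line:
  fixes F :: "'a::real_normed_vector \<Rightarrow> 'b::real_normed_vector"
  assumes "(F has_derivative F') (at (p + s *\<^sub>R u))"
  shows "((\<lambda>t. F (p + t *\<^sub>R u)) has_derivative (\<lambda>d. F' (d *\<^sub>R u))) (at s)"
proof -
  have "((\<lambda>t. p + t *\<^sub>R u) has_derivative (\<lambda>d. d *\<^sub>R u)) (at s)"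
    by (intro derivative_eq_intros) auto
  from diff_chain_at[OF this assms] show ?thesis by (simp add: o_def)
qed

lemma has_real_derivative_along_line:
  fixes F :: "'a::real_normed_vector \<Rightarrow> 'b::real_normed_vector" and B :: "'b \<Rightarrow> real"
  assumes "(F has_derivative F') (at (p + s *\<^sub>R u))" and "bounded_linear B"
  shows "((\<lambda>t. B (F (p + t *\<^sub>R u))) has_real_derivative B (F' u)) (at s)"
proof -
  have "linear F'" using assms(1) has_derivative_linear by blast
  then have "(\<lambda>d. B (F' (d *\<^sub>R u))) = (*) (B (F' u))"
    by (auto simp: fun_eq_iff linear_scale bounded_linear.linear[OF assms(2)])
  then show ?thesis
    using bounded_linear.has_derivative[OF assms(2) has_derivative_along_line[OF assms(1)]]
    by (simp add: has_field_derivative_def)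
qed

lemma has_real_derivative_along_line_gradient:
  fixes F :: "'a::real_inner \<Rightarrow> real"
  assumes "(F has_derivative (\<lambda>h. G \<bullet> h)) (at (p + s *\<^sub>R u))"
  shows "((\<lambda>t. F (p + t *\<^sub>R u)) has_real_derivative G \<bullet> u) (at s)"
  using has_real_derivative_along_line[OF assms bounded_linear_ident] by simp

lemma linearization_difference_le:
  fixes G L :: "'a::real_normed_vector \<Rightarrow> 'b::real_normed_vector"
  assumes approx: "\<And>y. norm (y - z) < \<delta> \<Longrightarrow> norm (G y - G z - L (y - z)) \<le> e * norm (y - z)"
    and "linear L" and "norm v < \<delta>" "norm w < \<delta>"
  shows "norm (G (z + v) - G (z + w) - L (v - w)) \<le> e * (norm v + norm w)"
proof -
  have "G (z + v) - G (z + w) - L (v - w) = (G (z + v) - G z - L v) - (G (z + w) - G z - L w)"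
    by (simp add: linear_diff[OF \<open>linear L\<close>] algebra_simps)
  then have "norm (G (z + v) - G (z + w) - L (v - w))
      \<le> norm (G (z + v) - G z - L v) + norm (G (z + w) - G z - L w)"
    by (metis norm_triangle_ineq4)
  also have "\<dots> \<le> e * norm v + e * norm w"
    using approx[of "z + v"] approx[of "z + w"] assms(3,4) by (intro add_mono) simp_all
  finally show ?thesis by (simp add: distrib_left)
qed

text \<open>Mean value theorem along \<open>u\<close>, with the gradient replaced by its linearisation at \<open>z\<close>.\<close>
lemma second_difference_approx:
  fixes \<psi> :: "'a::real_inner \<Rightarrow> real" and G L :: "'a \<Rightarrow> 'a"
  assumes ball: "ball z \<rho> \<subseteq> U"
    and d\<psi>: "\<And>w. w \<in> U \<Longrightarrow> (\<psi> has_derivative (\<lambda>h. G w \<bullet> h)) (at w)"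
    and approx: "\<And>y. norm (y - z) < \<delta> \<Longrightarrow> norm (G y - G z - L (y - z)) \<le> e * norm (y - z)"
    and "linear L" and e: "e \<ge> 0"
    and t: "t > 0" "t * (norm h + norm u) < \<rho>" "t * (norm h + norm u) < \<delta>"
  shows "\<bar>(\<psi> (z + t *\<^sub>R h + t *\<^sub>R u) - \<psi> (z + t *\<^sub>R h) - \<psi> (z + t *\<^sub>R u) + \<psi> z)
           - t^2 * (u \<bullet> L h)\<bar> \<le> t^2 * e * (norm h + 2 * norm u) * norm u"
proof -
  define \<phi> where "\<phi> s = \<psi> (z + t *\<^sub>R h + s *\<^sub>R u) - \<psi> (z + s *\<^sub>R u)" for s
  define \<phi>' where "\<phi>' s = (G (z + t *\<^sub>R h + s *\<^sub>R u) - G (z + s *\<^sub>R u)) \<bullet> u" for s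
  have norms: "norm (t *\<^sub>R h + s *\<^sub>R u) \<le> t * (norm h + norm u)" "norm (s *\<^sub>R u) \<le> t * norm u"
    if "0 \<le> s" "s \<le> t" for s
  proof -
    have "norm (t *\<^sub>R h + s *\<^sub>R u) \<le> t * norm h + s * norm u"
      using norm_triangle_ineq[of "t *\<^sub>R h" "s *\<^sub>R u"] that t by simp
    also have "\<dots> \<le> t * (norm h + norm u)" using that by (simp add: algebra_simps mult_right_mono)
    finally show "norm (t *\<^sub>R h + s *\<^sub>R u) \<le> t * (norm h + norm u)" .
    show "norm (s *\<^sub>R u) \<le> t * norm u" using that by (simp add: mult_right_mono)
  qed
  have near_z: "z + v \<in> U" if "norm v < \<rho>" for v
    using ball that by (auto simp: dist_norm)
  have tu: "t * norm u \<le> t * (norm h + norm u)" using t by simp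
  have "z + t *\<^sub>R h + s *\<^sub>R u \<in> U" "z + s *\<^sub>R u \<in> U" if "0 \<le> s" "s \<le> t" for s
    using near_z[of "t *\<^sub>R h + s *\<^sub>R u"] near_z[of "s *\<^sub>R u"] norms[OF that] t tu
    by (auto simp: add.assoc simp del: norm_scaleR)
  then have der: "DERIV \<phi> s :> \<phi>' s" if "0 \<le> s" "s \<le> t" for s
    using DERIV_diff[OF has_real_derivative_along_line_gradient[where p="z + t *\<^sub>R h"]
        has_real_derivative_along_line_gradient[where p=z]] d\<psi> that
    unfolding \<phi>_def \<phi>'_def by (simp add: inner_diff_left)
  obtain \<xi> where \<xi>: "0 < \<xi>" "\<xi> < t" and mvt: "\<phi> t - \<phi> 0 = (t - 0) * \<phi>' \<xi>"
    using MVT2[OF t(1) der] by auto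
  define v where "v = t *\<^sub>R h + \<xi> *\<^sub>R u"
  have v: "norm v \<le> t * (norm h + norm u)" "norm (\<xi> *\<^sub>R u) \<le> t * norm u"
    using norms[of \<xi>] \<xi> by (auto simp: v_def)
  have Lv: "L (v - \<xi> *\<^sub>R u) = t *\<^sub>R L h"
    by (simp add: v_def linear_scale[OF \<open>linear L\<close>])
  have "norm v < \<delta>" "norm (\<xi> *\<^sub>R u) < \<delta>" using v t tu by linarith+
  then have "norm (G (z + v) - G (z + \<xi> *\<^sub>R u) - t *\<^sub>R L h)
      \<le> e * (norm v + norm (\<xi> *\<^sub>R u))"
    using linearization_difference_le[where \<delta>=\<delta> and v=v and w="\<xi> *\<^sub>R u", OF approx \<open>linear L\<close>]
    unfolding Lv by simp
  also have "\<dots> \<le> e * (t * (norm h + 2 * norm u))"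
    using v e by (intro mult_left_mono) (simp_all add: distrib_left)
  finally have linearized: "norm (G (z + v) - G (z + \<xi> *\<^sub>R u) - t *\<^sub>R L h)
      \<le> e * (t * (norm h + 2 * norm u))" .
  have "\<phi>' \<xi> - t * (u \<bullet> L h) = (G (z + v) - G (z + \<xi> *\<^sub>R u) - t *\<^sub>R L h) \<bullet> u"
    by (simp add: \<phi>'_def v_def add.assoc inner_diff_left inner_diff_right inner_commute)
  then have "\<bar>\<phi>' \<xi> - t * (u \<bullet> L h)\<bar> \<le> norm (G (z + v) - G (z + \<xi> *\<^sub>R u) - t *\<^sub>R L h) * norm u"
    by (simp add: Cauchy_Schwarz_ineq2)
  also have "\<dots> \<le> e * (t * (norm h + 2 * norm u)) * norm u"
    using linearized by (rule mult_right_mono) simp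
  finally have "\<bar>\<phi>' \<xi> - t * (u \<bullet> L h)\<bar> \<le> e * (t * (norm h + 2 * norm u)) * norm u" .
  moreover have "t * \<phi>' \<xi> - t^2 * (u \<bullet> L h) = t * (\<phi>' \<xi> - t * (u \<bullet> L h))"
    by (simp add: power2_eq_square algebra_simps)
  ultimately have "\<bar>t * \<phi>' \<xi> - t^2 * (u \<bullet> L h)\<bar> \<le> t * (e * (t * (norm h + 2 * norm u)) * norm u)"
    using t by (simp add: abs_mult mult_left_mono)
  then show ?thesis using mvt by (simp add: \<phi>_def power2_eq_square algebra_simps)
qed

lemma gradient_derivative_asymmetry_le:
  fixes \<psi> :: "'a::real_inner \<Rightarrow> real" and G L :: "'a \<Rightarrow> 'a"
  assumes "e > 0" and "open U" "z \<in> U"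
    and d\<psi>: "\<And>w. w \<in> U \<Longrightarrow> (\<psi> has_derivative (\<lambda>h. G w \<bullet> h)) (at w)"
    and dG: "(G has_derivative L) (at z)"
  shows "\<bar>u \<bullet> L h - h \<bullet> L u\<bar>
    \<le> e * ((norm h + 2 * norm u) * norm u + (norm u + 2 * norm h) * norm h)"
proof -
  have "linear L" using dG has_derivative_linear by blast
  obtain \<rho> where \<rho>: "\<rho> > 0" "ball z \<rho> \<subseteq> U" using assms(2,3) open_contains_ball by blast
  obtain \<delta> where \<delta>: "\<delta> > 0"
    and approx: "\<And>y. norm (y - z) < \<delta> \<Longrightarrow> norm (G y - G z - L (y - z)) \<le> e * norm (y - z)"
    using dG \<open>e > 0\<close> unfolding has_derivative_at_alt by blast
  define t where "t = min \<rho> \<delta> / (2 * (norm h + norm u + 1))"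
  have den: "norm h + norm u + 1 > 0" by (simp add: add_nonneg_pos)
  then have t: "t > 0" using \<rho> \<delta> by (simp add: t_def)
  have "t * (norm h + norm u) \<le> t * (norm h + norm u + 1)" using t by simp
  also have "\<dots> = min \<rho> \<delta> / 2" using den by (simp add: t_def field_simps)
  finally have small: "t * (norm h + norm u) < min \<rho> \<delta>" using \<rho> \<delta> by linarith
  define D where "D = \<psi> (z + t *\<^sub>R h + t *\<^sub>R u) - \<psi> (z + t *\<^sub>R h) - \<psi> (z + t *\<^sub>R u) + \<psi> z"
  have "\<bar>D - t^2 * (u \<bullet> L h)\<bar> \<le> t^2 * e * (norm h + 2 * norm u) * norm u"
    using second_difference_approx[OF \<rho>(2) d\<psi> approx \<open>linear L\<close>, where t=t and h=h and u=u]
      small \<open>e > 0\<close> t by (simp add: D_def)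
  moreover have "\<bar>D - t^2 * (h \<bullet> L u)\<bar> \<le> t^2 * e * (norm u + 2 * norm h) * norm h"
    using second_difference_approx[OF \<rho>(2) d\<psi> approx \<open>linear L\<close>, where t=t and h=u and u=h]
      small \<open>e > 0\<close> t by (simp add: D_def algebra_simps)
  ultimately have "\<bar>(D - t^2 * (h \<bullet> L u)) - (D - t^2 * (u \<bullet> L h))\<bar>
      \<le> t^2 * (e * ((norm h + 2 * norm u) * norm u + (norm u + 2 * norm h) * norm h))"
    using abs_triangle_ineq4[of "D - t^2 * (h \<bullet> L u)" "D - t^2 * (u \<bullet> L h)"]
    by (simp add: algebra_simps)
  moreover have "(D - t^2 * (h \<bullet> L u)) - (D - t^2 * (u \<bullet> L h)) = t^2 * (u \<bullet> L h - h \<bullet> L u)"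
    by (simp add: algebra_simps)
  ultimately show ?thesis using t by (simp add: abs_mult)
qed

text \<open>Schwarz's theorem in the form needed here: only the gradient, not the second derivative,
  has to exist near \<open>z\<close>.\<close>
lemma gradient_derivative_symmetric:
  fixes \<psi> :: "'a::real_inner \<Rightarrow> real" and G L :: "'a \<Rightarrow> 'a"
  assumes "open U" "z \<in> U"
    and "\<And>w. w \<in> U \<Longrightarrow> (\<psi> has_derivative (\<lambda>h. G w \<bullet> h)) (at w)"
    and "(G has_derivative L) (at z)"
  shows "u \<bullet> L h = h \<bullet> L u"
proof -
  define C where "C = (norm h + 2 * norm u) * norm u + (norm u + 2 * norm h) * norm h"
  have "C \<ge> 0" by (simp add: C_def)
  have "\<bar>u \<bullet> L h - h \<bullet> L u\<bar> \<le> 0 + e" if "e > 0" for e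
  proof -
    have pos: "e / (C + 1) > 0" using that \<open>C \<ge> 0\<close> by simp
    have "\<bar>u \<bullet> L h - h \<bullet> L u\<bar> \<le> e / (C + 1) * C"
      using gradient_derivative_asymmetry_le[OF pos assms] unfolding C_def by simp
    also have "\<dots> \<le> e" using that \<open>C \<ge> 0\<close> by (simp add: field_simps)
    finally show ?thesis by simp
  qed
  then show ?thesis using field_le_epsilon[of "\<bar>u \<bullet> L h - h \<bullet> L u\<bar>" 0] by simp
qed

lemma powr_three_halves:
  fixes q :: real
  assumes "q \<ge> 0"
  shows "q powr (3/2) = q * sqrt q"
proof (cases "q = 0")
  case False
  have "q powr (3/2) = q powr (1 + 1/2)" by (rule arg_cong[where f="\<lambda>e. q powr e"]) simp
  also have "\<dots> = q powr 1 * q powr (1/2)" by (rule powr_add)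
  also have "\<dots> = q * sqrt q" using assms False by (simp add: powr_half_sqrt)
  finally show ?thesis .
qed simp

lemma le_quadratic_if_second_derivative_le:
  fixes \<phi> \<phi>' \<phi>'' :: "real \<Rightarrow> real"
  assumes t: "0 \<le> t"
    and d\<phi>: "\<And>s. 0 \<le> s \<Longrightarrow> s \<le> t \<Longrightarrow> DERIV \<phi> s :> \<phi>' s"
    and d\<phi>': "\<And>s. 0 \<le> s \<Longrightarrow> s \<le> t \<Longrightarrow> DERIV \<phi>' s :> \<phi>'' s"
    and bound: "\<And>s. 0 \<le> s \<Longrightarrow> s \<le> t \<Longrightarrow> \<phi>'' s \<le> C"
  shows "\<phi> t \<le> \<phi> 0 + \<phi>' 0 * t + C / 2 * t^2"
proof -
  have slope: "\<phi>' s \<le> \<phi>' 0 + C * s" if s: "0 \<le> s" "s \<le> t" for s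
  proof -
    have "\<phi>' s - C * s \<le> \<phi>' 0 - C * 0"
    proof (rule DERIV_nonpos_imp_nonincreasing[OF s(1)])
      fix \<sigma> assume \<sigma>: "0 \<le> \<sigma>" "\<sigma> \<le> s"
      then have "DERIV (\<lambda>\<sigma>. \<phi>' \<sigma> - C * \<sigma>) \<sigma> :> \<phi>'' \<sigma> - C * 1"
        using s by (intro DERIV_diff d\<phi>' DERIV_cmult DERIV_ident) auto
      then show "\<exists>y. DERIV (\<lambda>\<sigma>. \<phi>' \<sigma> - C * \<sigma>) \<sigma> :> y \<and> y \<le> 0"
        using s \<sigma> bound[of \<sigma>] by auto
    qed
    then show ?thesis by simp
  qed
  have "\<phi> t - \<phi>' 0 * t - C / 2 * t^2 \<le> \<phi> 0 - \<phi>' 0 * 0 - C / 2 * 0^2"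
  proof (rule DERIV_nonpos_imp_nonincreasing[OF t])
    fix \<sigma> assume \<sigma>: "0 \<le> \<sigma>" "\<sigma> \<le> t"
    have "DERIV (\<lambda>\<sigma>. \<phi> \<sigma> - \<phi>' 0 * \<sigma> - C / 2 * \<sigma>^2) \<sigma> :> \<phi>' \<sigma> - \<phi>' 0 - C * \<sigma>"
      using d\<phi>[OF \<sigma>] by (auto intro!: derivative_eq_intros)
    then show "\<exists>y. DERIV (\<lambda>\<sigma>. \<phi> \<sigma> - \<phi>' 0 * \<sigma> - C / 2 * \<sigma>^2) \<sigma> :> y \<and> y \<le> 0"
      using slope[OF \<sigma>] by auto
  qed
  then show ?thesis by simp
qed

lemma segment_first_exit:
  fixes U :: "'a::real_normed_vector set"
  assumes U: "open U" "x \<in> U" "x + h \<notin> U"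
  obtains T where "0 < T" "T \<le> 1" "x + T *\<^sub>R h \<notin> U" "\<And>s. 0 \<le> s \<Longrightarrow> s < T \<Longrightarrow> x + s *\<^sub>R h \<in> U"
proof -
  define E where "E = {0..1} \<inter> (\<lambda>t. x + t *\<^sub>R h) -` (- U)"
  have "closed E"
    unfolding E_def
    by (intro closed_Int closed_atLeastAtMost continuous_closed_vimage closed_Compl U(1)
        continuous_intros)
  moreover have "1 \<in> E" using U(3) by (simp add: E_def)
  moreover have "bdd_below E" by (auto simp: E_def bdd_below_def)
  ultimately have T: "Inf E \<in> E" using closed_contains_Inf by blast
  show ?thesis
  proof (rule that)
    show "0 < Inf E" using T U(2) by (cases "Inf E = 0") (auto simp: E_def)
    show "Inf E \<le> 1" "x + Inf E *\<^sub>R h \<notin> U" using T by (auto simp: E_def)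
    show "x + s *\<^sub>R h \<in> U" if "0 \<le> s" "s < Inf E" for s
      using cInf_lower[OF _ \<open>bdd_below E\<close>, of s] that \<open>Inf E \<le> 1\<close> by (force simp: E_def)
  qed
qed

text \<open>If \<open>(1 - s r) \<bar>\<psi>'\<bar> \<le> 2 r \<psi>\<close>, then \<open>\<psi> (1 - s r)\<^sup>2\<close> decreases and \<open>\<psi> / (1 - s r)\<^sup>2\<close> increases.\<close>
lemma bounds_from_log_derivative_bound:
  fixes \<psi> \<psi>' :: "real \<Rightarrow> real"
  assumes r: "0 \<le> r" "r < 1" and t: "0 \<le> t" "t \<le> 1"
    and d\<psi>: "\<And>s. 0 \<le> s \<Longrightarrow> s \<le> t \<Longrightarrow> DERIV \<psi> s :> \<psi>' s"
    and bound: "\<And>s. 0 \<le> s \<Longrightarrow> s \<le> t \<Longrightarrow> (1 - s * r) * \<bar>\<psi>' s\<bar> \<le> 2 * r * \<psi> s"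
  shows "(1 - t * r)^2 * \<psi> 0 \<le> \<psi> t" and "\<psi> t \<le> \<psi> 0 / (1 - t * r)^2"
proof -
  have pos: "1 - s * r > 0" if "0 \<le> s" "s \<le> t" for s
    using that t r mult_left_le_one_le[of r s] by linarith
  have dw: "DERIV (\<lambda>s. (1 - s * r)^2) s :> - 2 * r * (1 - s * r)" for s
    by (auto intro!: derivative_eq_intros simp: algebra_simps)
  have "\<psi> t * (1 - t * r)^2 \<le> \<psi> 0 * (1 - 0 * r)^2"
  proof (rule DERIV_nonpos_imp_nonincreasing[OF t(1)])
    fix s assume s: "0 \<le> s" "s \<le> t"
    have "(1 - s * r) * ((1 - s * r) * \<psi>' s - 2 * r * \<psi> s) \<le> 0"
      using bound[OF s] pos[OF s] abs_ge_self[of "\<psi>' s"]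
      by (intro mult_nonneg_nonpos) (auto intro: order.trans[OF mult_left_mono])
    then show "\<exists>y. DERIV (\<lambda>s. \<psi> s * (1 - s * r)^2) s :> y \<and> y \<le> 0"
      using DERIV_mult[OF d\<psi>[OF s] dw] by (auto simp: power2_eq_square algebra_simps)
  qed
  then show "\<psi> t \<le> \<psi> 0 / (1 - t * r)^2"
    using pos[OF t(1) order.refl] by (simp add: field_simps)
  have "\<psi> 0 / (1 - 0 * r)^2 \<le> \<psi> t / (1 - t * r)^2"
  proof (rule DERIV_nonneg_imp_nondecreasing[OF t(1)])
    fix s assume s: "0 \<le> s" "s \<le> t"
    have "(1 - s * r) * (- \<psi>' s) \<le> (1 - s * r) * \<bar>\<psi>' s\<bar>"
      using pos[OF s] by (intro mult_left_mono) auto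
    then have "0 \<le> (1 - s * r) * ((1 - s * r) * \<psi>' s + 2 * r * \<psi> s)"
      using bound[OF s] pos[OF s] by (intro mult_nonneg_nonneg) auto
    moreover have "\<psi>' s * (1 - s * r)^2 - \<psi> s * (- 2 * r * (1 - s * r))
        = (1 - s * r) * ((1 - s * r) * \<psi>' s + 2 * r * \<psi> s)"
      by (simp add: power2_eq_square algebra_simps)
    moreover have "DERIV (\<lambda>s. \<psi> s / (1 - s * r)^2) s :>
        (\<psi>' s * (1 - s * r)^2 - \<psi> s * (- 2 * r * (1 - s * r))) / ((1 - s * r)^2 * (1 - s * r)^2)"
      using DERIV_divide[OF d\<psi>[OF s] dw] pos[OF s] by simp
    ultimately show "\<exists>y. DERIV (\<lambda>s. \<psi> s / (1 - s * r)^2) s :> y \<and> 0 \<le> y"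
      using pos[OF s] by (fastforce intro: divide_nonneg_pos)
  qed
  then show "(1 - t * r)^2 * \<psi> 0 \<le> \<psi> t"
    using pos[OF t(1) order.refl] by (simp add: field_simps)
qed

section \<open>Self-concordant barriers\<close>

lemma convex_cone_add_mem_interior:
  fixes K :: "'a::real_normed_vector set"
  assumes "convex K" "cone K" "a \<in> interior K" "b \<in> K"
  shows "b + a \<in> interior K"
proof -
  have "(\<lambda>x. b + x) ` interior K \<subseteq> K"
    using assms(1,2,4) interior_subset convex_cone[of K] by blast
  moreover have "open ((\<lambda>x. b + x) ` interior K)" by (intro open_translation) simp
  ultimately show ?thesis using assms(3) interior_maximal by blast
qed

lemma cone_scaleR_mem_interior:
  fixes K :: "'a::real_normed_vector set"
  assumes "cone K" "a \<in> interior K" "t > 0"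
  shows "t *\<^sub>R a \<in> interior K"
proof -
  have "(\<lambda>x. t *\<^sub>R x) ` interior K \<subseteq> K"
    using assms(1,3) interior_subset[of K] by (auto simp: cone_def)
  moreover have "open ((\<lambda>x. t *\<^sub>R x) ` interior K)" using assms(3) by (intro open_scaling) auto
  ultimately show ?thesis using assms(2) interior_maximal by blast
qed

definition local_norm :: "(real^'n \<Rightarrow> real^'n^'n) \<Rightarrow> real^'n \<Rightarrow> real^'n \<Rightarrow> real" where
  "local_norm H x v = sqrt (v \<bullet> (H x *v v))"

text \<open>The description of
  \<open>\<nu>\<close> as a supremum is left out: logarithmic homogeneity alone pins \<open>\<nu>\<close> down.\<close>
locale lhscb =
  fixes K :: "(real^'n) set" and f :: "real^'n \<Rightarrow> real" and g :: "real^'n \<Rightarrow> real^'n"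
    and H :: "real^'n \<Rightarrow> real^'n^'n" and H' :: "real^'n \<Rightarrow> real^'n \<Rightarrow> real^'n^'n" and \<nu> :: real
  assumes proper: "proper_cone K"
    and gradient: "\<And>x. x \<in> interior K \<Longrightarrow> (f has_derivative (\<lambda>h. g x \<bullet> h)) (at x)"
    and hessian: "\<And>x. x \<in> interior K \<Longrightarrow> (g has_derivative (\<lambda>h. H x *v h)) (at x)"
    and third_derivative: "\<And>x. x \<in> interior K \<Longrightarrow> (H has_derivative H' x) (at x)"
    and self_concordant: "\<And>x h. x \<in> interior K \<Longrightarrow>
      \<bar>h \<bullet> (H' x h *v h)\<bar> \<le> 2 * (h \<bullet> (H x *v h)) powr (3/2)"
    and strictly_convex: "strictly_convex_on (interior K) f"
    and barrier: "\<And>p. p \<in> frontier K \<Longrightarrow> filterlim f at_top (at p within interior K)"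
    and hessian_invertible: "\<And>x. x \<in> interior K \<Longrightarrow> invertible (H x)"
    and log_homogeneous: "\<And>x t. x \<in> interior K \<Longrightarrow> t > 0 \<Longrightarrow> f (t *\<^sub>R x) = f x - \<nu> * ln t"

lemma LHSCB_imp_lhscb:
  assumes "proper_cone K" and "LHSCB K f g H \<nu>"
  obtains H' where "lhscb K f g H H' \<nu>"
proof -
  obtain H' where "\<forall>x\<in>interior K. (H has_derivative H' x) (at x)
      \<and> (\<forall>h. \<bar>h \<bullet> (H' x h *v h)\<bar> \<le> 2 * (h \<bullet> (H x *v h)) powr (3/2))"
    using assms(2) unfolding LHSCB_def by blast
  then have "lhscb K f g H H' \<nu>"
    using assms unfolding LHSCB_def by unfold_locales blast+
  then show thesis by (rule that)
qed

context lhscb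
begin

lemma K_closed: "closed K" and K_convex: "convex K" and K_cone: "cone K"
  and interior_K_nonempty: "interior K \<noteq> {}"
  using proper by (auto simp: proper_cone_def)

lemma add_mem_interior: "a \<in> interior K \<Longrightarrow> b \<in> K \<Longrightarrow> b + a \<in> interior K"
  by (rule convex_cone_add_mem_interior[OF K_convex K_cone])

lemma scaleR_mem_interior: "a \<in> interior K \<Longrightarrow> t > 0 \<Longrightarrow> t *\<^sub>R a \<in> interior K"
  by (rule cone_scaleR_mem_interior[OF K_cone])

lemma segment_mem_interior:
  assumes x: "x \<in> interior K" and xt: "x + t *\<^sub>R h \<in> interior K" and s: "0 \<le> s" "s \<le> t"
  shows "x + s *\<^sub>R h \<in> interior K"
proof (cases "t = 0")
  case False
  then have "x + s *\<^sub>R h = (1 - s / t) *\<^sub>R x + (s / t) *\<^sub>R (x + t *\<^sub>R h)"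
    by (simp add: algebra_simps)
  also have "\<dots> \<in> interior K"
    using convexD[OF convex_interior[OF K_convex] x xt, of "1 - s / t" "s / t"] s False by simp
  finally show ?thesis .
qed (use s x in simp)

lemma hessian_symmetric: "x \<in> interior K \<Longrightarrow> transpose (H x) = H x"
  by (intro symmetric_matrixI gradient_derivative_symmetric[OF open_interior _ gradient hessian])

lemma third_derivative_linear: "x \<in> interior K \<Longrightarrow> linear (H' x)"
  using third_derivative has_derivative_linear by blast

lemma third_derivative_symmetric:
  assumes x: "x \<in> interior K"
  shows "transpose (H' x h) = H' x h"
proof -
  have "H' x h $ i $ j = H' x h $ j $ i" for i j
  proof -
    have entry: "bounded_linear (\<lambda>M::real^'n^'n. M $ k $ l)" for k l
      using bounded_linear_compose[OF bounded_linear_vec_nth bounded_linear_vec_nth] .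
    have entry_derivative: "((\<lambda>y. H y $ k $ l) has_derivative (\<lambda>h. H' x h $ k $ l)) (at x)" for k l
      using bounded_linear.has_derivative[OF entry third_derivative[OF x]] .
    have "H y $ j $ i = H y $ i $ j" if "y \<in> interior K" for y
      using hessian_symmetric[OF that] by (metis transpose_def vec_lambda_beta)
    then have "((\<lambda>y. H y $ i $ j) has_derivative (\<lambda>h. H' x h $ j $ i)) (at x)"
      by (intro has_derivative_transform_within_open[OF entry_derivative open_interior x]) auto
    from has_derivative_unique[OF entry_derivative this] show ?thesis by meson
  qed
  then show ?thesis by (simp add: vec_eq_iff transpose_def)
qed

lemma third_derivative_swap:
  assumes x: "x \<in> interior K"
  shows "b \<bullet> (H' x a *v c) = a \<bullet> (H' x b *v c)"
proof (rule gradient_derivative_symmetric[OF open_interior x])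
  fix w assume w: "w \<in> interior K"
  have "(\<lambda>h. (H w *v h) \<bullet> c) = (\<lambda>h. (H w *v c) \<bullet> h)"
    using symmetric_matrix_inner_commute[OF hessian_symmetric[OF w]] by (auto simp: inner_commute)
  then show "((\<lambda>z. g z \<bullet> c) has_derivative (\<lambda>h. (H w *v c) \<bullet> h)) (at w)"
    using bounded_linear.has_derivative[OF bounded_linear_inner_left[of c] hessian[OF w]] by simp
next
  show "((\<lambda>z. H z *v c) has_derivative (\<lambda>h. H' x h *v c)) (at x)"
    using bounded_linear.has_derivative[OF bounded_linear_matrix_vector_mult_left
        third_derivative[OF x]] .
qed

lemma convex_on_interior: "convex_on (interior K) f"
proof (rule convex_onI)
  fix t :: real and x y assume "0 < t" "t < 1" "x \<in> interior K" "y \<in> interior K"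
  then show "f ((1 - t) *\<^sub>R x + t *\<^sub>R y) \<le> (1 - t) * f x + t * f y"
    using strictly_convex unfolding strictly_convex_on_def
    by (cases "x = y") (auto simp: scaleR_left_distrib[symmetric] algebra_simps less_imp_le)
qed (rule convex_interior[OF K_convex])

lemma gradient_inequality:
  assumes x: "x \<in> interior K" and y: "y \<in> interior K"
  shows "f x + g x \<bullet> (y - x) \<le> f y"
proof -
  define \<phi> where "\<phi> t = f (x + t *\<^sub>R (y - x))" for t
  have "(\<phi> has_real_derivative g x \<bullet> (y - x)) (at 0)"
    unfolding \<phi>_def by (rule has_real_derivative_along_line_gradient) (simp add: gradient[OF x])
  then have "((\<lambda>t. (\<phi> t - \<phi> 0) / t) \<longlongrightarrow> g x \<bullet> (y - x)) (at_right 0)"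
    unfolding has_field_derivative_iff by (auto intro: tendsto_mono[OF at_le])
  moreover have "\<forall>\<^sub>F t in at_right 0. (\<phi> t - \<phi> 0) / t \<le> \<phi> 1 - \<phi> 0"
    unfolding eventually_at_right_field
  proof (intro exI[of _ 1] conjI allI impI)
    fix t :: real assume "0 < t" "t < 1"
    then have "f ((1 - t) *\<^sub>R x + t *\<^sub>R y) \<le> (1 - t) * f x + t * f y"
      using convex_onD[OF convex_on_interior, of t x y] x y by simp
    moreover have "(1 - t) *\<^sub>R x + t *\<^sub>R y = x + t *\<^sub>R (y - x)" by (simp add: algebra_simps)
    ultimately have "\<phi> t - \<phi> 0 \<le> (\<phi> 1 - \<phi> 0) * t" by (simp add: \<phi>_def algebra_simps)
    then show "(\<phi> t - \<phi> 0) / t \<le> \<phi> 1 - \<phi> 0" using \<open>0 < t\<close> by (simp add: pos_divide_le_eq)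
  qed simp
  ultimately have "g x \<bullet> (y - x) \<le> \<phi> 1 - \<phi> 0"
    by (rule tendsto_upperbound) simp
  then show ?thesis by (simp add: \<phi>_def)
qed

lemma gradient_monotone:
  assumes "x \<in> interior K" "y \<in> interior K"
  shows "0 \<le> (g y - g x) \<bullet> (y - x)"
  using gradient_inequality[OF assms] gradient_inequality[OF assms(2,1)]
  by (simp add: inner_diff_left inner_diff_right inner_commute)

lemma hessian_psd:
  assumes x: "x \<in> interior K"
  shows "0 \<le> h \<bullet> (H x *v h)"
proof (rule ccontr)
  assume "\<not> ?thesis"
  then have neg: "(H x *v h) \<bullet> h < 0" by (simp add: inner_commute)
  define \<phi> where "\<phi> s = g (x + s *\<^sub>R h) \<bullet> h" for s
  have "(\<phi> has_real_derivative (H x *v h) \<bullet> h) (at 0)"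
    using has_real_derivative_along_line[OF _ bounded_linear_inner_left, where p=x and s=0]
      hessian[OF x] unfolding \<phi>_def by simp
  from DERIV_neg_dec_right[OF this neg] obtain d where "d > 0" "\<forall>s>0. s < d \<longrightarrow> \<phi> s < \<phi> 0"
    by auto
  then have "\<forall>\<^sub>F s in at_right 0. \<phi> s < \<phi> 0" by (auto simp: eventually_at_right_field)
  moreover have "((\<lambda>s. x + s *\<^sub>R h) \<longlongrightarrow> x) (at_right 0)"
    by (intro tendsto_eq_intros) auto
  then have "\<forall>\<^sub>F s in at_right 0. x + s *\<^sub>R h \<in> interior K"
    using topological_tendstoD[OF _ open_interior x] by blast
  moreover have "\<forall>\<^sub>F s in at_right (0::real). s > 0" by (rule eventually_at_right_less)
  ultimately have "\<forall>\<^sub>F s in at_right 0. \<phi> s < \<phi> 0 \<and> x + s *\<^sub>R h \<in> interior K \<and> s > 0"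
    by (simp add: eventually_conj_iff)
  then obtain s where s: "\<phi> s < \<phi> 0" "x + s *\<^sub>R h \<in> interior K" "s > 0"
    using eventually_happens'[OF trivial_limit_at_right_real] by blast
  have "0 \<le> s * (\<phi> s - \<phi> 0)"
    using gradient_monotone[OF x s(2)] by (simp add: \<phi>_def inner_diff_left)
  then show False using s by (simp add: zero_le_mult_iff)
qed

lemma hessian_pos:
  assumes x: "x \<in> interior K" and h: "h \<noteq> 0"
  shows "0 < h \<bullet> (H x *v h)"
proof (rule ccontr)
  assume "\<not> ?thesis"
  then have "h \<bullet> (H x *v h) = 0" using hessian_psd[OF x, of h] by simp
  then have "(u \<bullet> (H x *v h))^2 \<le> 0" for u
    using psd_form_cauchy_schwarz[OF hessian_symmetric[OF x] hessian_psd[OF x], of u h] by simp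
  then have "(H x *v h) \<bullet> (H x *v h) = 0" by (simp del: zero_le_power2)
  then have "H x *v h = 0" by simp
  then show False
    using matrix_inv_cancel(2)[OF hessian_invertible[OF x], of h] h by simp
qed

lemma local_norm_nonneg: "x \<in> interior K \<Longrightarrow> 0 \<le> local_norm H x v"
  by (simp add: local_norm_def hessian_psd)

lemma third_derivative_bound:
  assumes x: "x \<in> interior K"
  shows "\<bar>b \<bullet> (H' x a *v b)\<bar> \<le> 2 * local_norm H x a * (b \<bullet> (H x *v b))"
proof -
  interpret symmetric_trilinear_form "H x" "H' x"
    by (rule symmetric_trilinear_form.intro[OF hessian_symmetric[OF x] hessian_pos[OF x]
          third_derivative_linear[OF x] third_derivative_swap[OF x]
          third_derivative_symmetric[OF x]])
  show ?thesis
    unfolding local_norm_def by (rule trilinear_bound) (rule self_concordant[OF x])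
qed

lemma gradient_inner_self:
  assumes x: "x \<in> interior K"
  shows "g x \<bullet> x = - \<nu>"
proof -
  have "((\<lambda>t. f (0 + t *\<^sub>R x)) has_real_derivative (g x \<bullet> x)) (at 1)"
    using gradient[OF x] by (intro has_real_derivative_along_line_gradient) simp
  moreover have "((\<lambda>t. f x - \<nu> * ln t) has_real_derivative (- \<nu>)) (at 1)"
    by (auto intro!: derivative_eq_intros)
  then have "((\<lambda>t. f (0 + t *\<^sub>R x)) has_real_derivative (- \<nu>)) (at 1)"
    by (rule has_field_derivative_transform_within_open[of _ _ _ "{0<..}"])
      (use log_homogeneous x in auto)
  ultimately show ?thesis by (rule DERIV_unique)
qed

lemma hessian_mult_self:
  assumes x: "x \<in> interior K"
  shows "H x *v x = - g x"
proof -
  have "((\<lambda>z. g z \<bullet> z) has_derivative (\<lambda>h. g x \<bullet> h + (H x *v h) \<bullet> x)) (at x)"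
    using has_derivative_inner[OF hessian[OF x] has_derivative_ident] by simp
  moreover have "((\<lambda>z. g z \<bullet> z) has_derivative (\<lambda>h. 0)) (at x)"
    by (rule has_derivative_transform_within_open[OF has_derivative_const open_interior x])
      (use gradient_inner_self in auto)
  ultimately have "(\<lambda>h. g x \<bullet> h + (H x *v h) \<bullet> x) = (\<lambda>h. 0)" by (rule has_derivative_unique)
  then have "g x \<bullet> w + (H x *v w) \<bullet> x = 0" for w by meson
  moreover have "(H x *v w) \<bullet> x = w \<bullet> (H x *v x)" for w
    using symmetric_matrix_inner_commute[OF hessian_symmetric[OF x], of x w]
    by (simp add: inner_commute)
  ultimately have "w \<bullet> (H x *v x + g x) = 0" for w
    by (metis inner_add_right inner_commute add.commute)
  then have "(H x *v x + g x) \<bullet> (H x *v x + g x) = 0" .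
  then show ?thesis by (simp add: eq_neg_iff_add_eq_0)
qed

lemma nu_nonneg: "0 \<le> \<nu>"
proof -
  obtain x where x: "x \<in> interior K" using interior_K_nonempty by blast
  show ?thesis
    using hessian_psd[OF x, of x] hessian_mult_self[OF x] gradient_inner_self[OF x]
    by (simp add: inner_commute)
qed

lemma dual_local_norm_gradient:
  assumes x: "x \<in> interior K"
  shows "dual_local_norm H x (g x) = sqrt \<nu>"
proof -
  have "H x *v (- x) = g x"
    using hessian_mult_self[OF x] linear_neg[OF matrix_vector_mul_linear, of "H x" x] by simp
  then have "matrix_inv (H x) *v g x = - x"
    using matrix_inv_cancel(2)[OF hessian_invertible[OF x], of "- x"] by simp
  then show ?thesis using gradient_inner_self[OF x] by (simp add: dual_local_norm_def)
qed

text \<open>Along a ray \<open>y + t z\<close> into the cone, \<open>f\<close> stays bounded: the ray is a rescaling of the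
  segment from \<open>y\<close> to \<open>z\<close> and \<open>\<nu> \<ge> 0\<close>.\<close>
lemma barrier_bounded_on_ray:
  assumes y: "y \<in> interior K" and z: "z \<in> interior K" and t: "t > 0"
  shows "f (y + t *\<^sub>R z) \<le> max (f y) (f z)"
proof -
  define s where "s = t / (1 + t)"
  have s: "0 \<le> s" "s \<le> 1" using t by (auto simp: s_def)
  define w where "w = (1 - s) *\<^sub>R y + s *\<^sub>R z"
  have w: "w \<in> interior K"
    using convexD[OF convex_interior[OF K_convex] y z, of "1 - s" s] s by (simp add: w_def)
  have "f w \<le> (1 - s) * f y + s * f z"
    unfolding w_def using convex_onD[OF convex_on_interior s y z] .
  also have "\<dots> \<le> (1 - s) * max (f y) (f z) + s * max (f y) (f z)"
    using s by (intro add_mono mult_left_mono) auto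
  finally have "f w \<le> max (f y) (f z)" by (simp add: algebra_simps)
  moreover have "y + t *\<^sub>R z = (1 + t) *\<^sub>R w"
    using t by (simp add: w_def s_def scaleR_add_right field_simps)
  then have "f (y + t *\<^sub>R z) = f w - \<nu> * ln (1 + t)" using log_homogeneous[OF w] t by simp
  moreover have "0 \<le> \<nu> * ln (1 + t)" using nu_nonneg t by simp
  ultimately show ?thesis by linarith
qed

lemma gradient_inner_nonpos:
  assumes y: "y \<in> interior K" and z: "z \<in> K"
  shows "g y \<bullet> z \<le> 0"
proof -
  have interior_case: "g y \<bullet> w \<le> 0" if w: "w \<in> interior K" for w
  proof (rule ccontr)
    assume "\<not> ?thesis"
    then have pos: "g y \<bullet> w > 0" by simp
    define t where "t = (\<bar>max (f y) (f w) - f y\<bar> + 1) / (g y \<bullet> w)"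
    have "t > 0" using pos by (simp add: t_def add_nonneg_pos)
    then have "y + t *\<^sub>R w \<in> interior K"
      using add_mem_interior[OF scaleR_mem_interior[OF w] interior_subset[THEN subsetD, OF y]]
      by (simp add: add.commute)
    then have "f y + t * (g y \<bullet> w) \<le> max (f y) (f w)"
      using gradient_inequality[OF y] barrier_bounded_on_ray[OF y w \<open>t > 0\<close>] by fastforce
    then show False using pos by (simp add: t_def)
  qed
  define e where "e = (g y \<bullet> z) / (2 * (\<nu> + 1))"
  show ?thesis
  proof (rule ccontr)
    assume "\<not> ?thesis"
    then have pos: "g y \<bullet> z > 0" by simp
    then have "e > 0" using nu_nonneg by (simp add: e_def add_nonneg_pos)
    then have "g y \<bullet> (z + e *\<^sub>R y) \<le> 0"
      using interior_case add_mem_interior[OF scaleR_mem_interior[OF y] z] by blast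
    then have "g y \<bullet> z \<le> e * \<nu>" using gradient_inner_self[OF y] by (simp add: inner_add_right)
    also have "\<dots> = (g y \<bullet> z) * (\<nu> / (2 * (\<nu> + 1)))" by (simp add: e_def)
    also have "\<dots> < g y \<bullet> z"
      using pos mult_strict_left_mono[of "\<nu> / (2 * (\<nu> + 1))" 1] nu_nonneg by simp
    finally show False by simp
  qed
qed

lemma local_norm_pos: "x \<in> interior K \<Longrightarrow> h \<noteq> 0 \<Longrightarrow> 0 < local_norm H x h"
  by (simp add: local_norm_def hessian_pos)

text \<open>Self-concordance says exactly that \<open>s \<mapsto> 1 / \<parallel>z\<parallel>\<^bsub>p + s z\<^esub>\<close> is 1-Lipschitz.\<close>
lemma inverse_local_norm_lipschitz:
  assumes seg: "\<And>s. a \<le> s \<Longrightarrow> s \<le> b \<Longrightarrow> p + s *\<^sub>R z \<in> interior K"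
    and z: "z \<noteq> 0" and t: "a \<le> t" "t \<le> b"
  shows "\<bar>1 / local_norm H (p + t *\<^sub>R z) z - 1 / local_norm H (p + a *\<^sub>R z) z\<bar> \<le> t - a"
proof -
  define q where "q s = z \<bullet> (H (p + s *\<^sub>R z) *v z)" for s
  define q' where "q' s = z \<bullet> (H' (p + s *\<^sub>R z) z *v z)" for s
  define u' where "u' s = - q' s / (2 * q s * sqrt (q s))" for s
  have q: "q s > 0" if "a \<le> s" "s \<le> b" for s
    using hessian_pos[OF seg[OF that] z] by (simp add: q_def)
  have du: "DERIV (\<lambda>s. inverse (sqrt (q s))) s :> u' s" if s: "a \<le> s" "s \<le> b" for s
  proof -
    have "DERIV q s :> q' s"
      unfolding q_def q'_def
      using has_real_derivative_along_line[OF third_derivative[OF seg[OF s]]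
          bounded_linear_compose[OF bounded_linear_inner_right
            bounded_linear_matrix_vector_mult_left]] .
    from DERIV_inverse_fun[OF DERIV_chain2[OF DERIV_real_sqrt[OF q[OF s]] this]]
    show ?thesis using q[OF s] by (simp add: u'_def field_simps)
  qed
  have u'_bound: "\<bar>u' s\<bar> \<le> 1" if s: "a \<le> s" "s \<le> b" for s
  proof -
    have "\<bar>q' s\<bar> \<le> 2 * q s * sqrt (q s)"
      using self_concordant[OF seg[OF s], of z] q[OF s]
      by (simp add: q_def q'_def powr_three_halves)
    then show ?thesis using q[OF s] by (simp add: u'_def abs_div)
  qed
  have "inverse (sqrt (q t)) - t \<le> inverse (sqrt (q a)) - a"
  proof (rule DERIV_nonpos_imp_nonincreasing[OF t(1)])
    fix s assume s: "a \<le> s" "s \<le> t"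
    then have "s \<le> b" using t by simp
    then show "\<exists>y. DERIV (\<lambda>s. inverse (sqrt (q s)) - s) s :> y \<and> y \<le> 0"
      using DERIV_diff[OF du[OF s(1)] DERIV_ident] u'_bound[OF s(1)] by auto
  qed
  moreover have "inverse (sqrt (q a)) + a \<le> inverse (sqrt (q t)) + t"
  proof (rule DERIV_nonneg_imp_nondecreasing[OF t(1)])
    fix s assume s: "a \<le> s" "s \<le> t"
    then have "s \<le> b" using t by simp
    then show "\<exists>y. DERIV (\<lambda>s. inverse (sqrt (q s)) + s) s :> y \<and> y \<ge> 0"
      using DERIV_add[OF du[OF s(1)] DERIV_ident] u'_bound[OF s(1)] by auto
  qed
  ultimately show ?thesis by (simp add: q_def local_norm_def divide_inverse abs_le_iff)
qed

lemma ray_mem_interior: "y \<in> interior K \<Longrightarrow> z \<in> K \<Longrightarrow> 0 \<le> s \<Longrightarrow> y + s *\<^sub>R z \<in> interior K"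
  using add_mem_interior[of y "s *\<^sub>R z"] K_cone by (simp add: cone_def add.commute)

text \<open>The derivative of \<open>s \<mapsto> g (y + s z) \<bullet> z\<close> is \<open>\<parallel>z\<parallel>\<^sup>2\<^bsub>y + s z\<^esub>\<close>, which by the Lipschitz bound decays
  no faster than \<open>1 / (1 / \<parallel>z\<parallel>\<^bsub>y\<^esub> + s)\<^sup>2\<close>; since \<open>g (y + s z) \<bullet> z\<close> never becomes positive, its initial
  value is at most \<open>- \<parallel>z\<parallel>\<^bsub>y\<^esub>\<close>.\<close>
lemma local_norm_le_neg_gradient_inner:
  assumes y: "y \<in> interior K" and z: "z \<in> K"
  shows "local_norm H y z \<le> - (g y \<bullet> z)"
proof (cases "z = 0")
  case False
  define u0 where "u0 = 1 / local_norm H y z"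
  have u0: "u0 > 0" using local_norm_pos[OF y False] by (simp add: u0_def)
  define \<phi> where "\<phi> s = g (y + s *\<^sub>R z) \<bullet> z" for s
  have d\<phi>: "DERIV \<phi> s :> (local_norm H (y + s *\<^sub>R z) z)^2" if "0 \<le> s" for s
    using has_real_derivative_along_line[OF hessian[OF ray_mem_interior[OF y z that]]
        bounded_linear_inner_left, of z] hessian_psd[OF ray_mem_interior[OF y z that], of z]
    unfolding \<phi>_def by (simp add: local_norm_def inner_commute)
  have lower: "1 / (u0 + s) \<le> local_norm H (y + s *\<^sub>R z) z" if s: "0 \<le> s" for s
  proof -
    have "1 / local_norm H (y + s *\<^sub>R z) z \<le> u0 + s"
      using inverse_local_norm_lipschitz[of 0 s y z s] ray_mem_interior[OF y z] False s
      by (simp add: u0_def abs_le_iff)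
    then show ?thesis
      using local_norm_pos[OF ray_mem_interior[OF y z s] False] u0 s by (simp add: field_simps)
  qed
  have "\<phi> 0 + 1 / u0 \<le> 1 / (u0 + T)" if T: "T \<ge> 0" for T
  proof -
    have "\<phi> 0 + 1 / (u0 + 0) \<le> \<phi> T + 1 / (u0 + T)"
    proof (rule DERIV_nonneg_imp_nondecreasing[OF T])
      fix s assume s: "0 \<le> s" "s \<le> T"
      have "DERIV (\<lambda>s. 1 / (u0 + s)) s :> - 1 / (u0 + s)^2"
        using u0 s by (auto intro!: derivative_eq_intros simp: power2_eq_square field_simps)
      moreover have "(1 / (u0 + s))^2 \<le> (local_norm H (y + s *\<^sub>R z) z)^2"
        using lower[OF s(1)] u0 s by (intro power_mono) auto
      ultimately show "\<exists>d. DERIV (\<lambda>s. \<phi> s + 1 / (u0 + s)) s :> d \<and> d \<ge> 0"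
        using DERIV_add[OF d\<phi>[OF s(1)]] by (fastforce simp: power_divide)
    qed
    moreover have "\<phi> T \<le> 0" using gradient_inner_nonpos[OF ray_mem_interior[OF y z T] z]
      by (simp add: \<phi>_def)
    ultimately show ?thesis by simp
  qed
  then have "\<forall>\<^sub>F T in at_top. \<phi> 0 + 1 / u0 \<le> 1 / (u0 + T)"
    by (auto simp: eventually_at_top_linorder)
  moreover have "((\<lambda>T. 1 / (u0 + T)) \<longlongrightarrow> 0) at_top"
    by (intro tendsto_divide_0[OF tendsto_const] filterlim_at_top_imp_at_infinity
        filterlim_tendsto_add_at_top[OF tendsto_const filterlim_ident])
  ultimately have "\<phi> 0 + 1 / u0 \<le> 0"
    by (intro tendsto_le[OF trivial_limit_at_top_linorder _ tendsto_const])
  then show ?thesis by (simp add: u0_def \<phi>_def)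
qed (simp add: local_norm_def)

lemma local_norm_along_segment_le:
  assumes x: "x \<in> interior K" and xt: "x + t *\<^sub>R h \<in> interior K" and t: "0 \<le> t" "t \<le> 1"
    and small: "local_norm H x h < 1"
  shows "local_norm H (x + t *\<^sub>R h) h \<le> local_norm H x h / (1 - t * local_norm H x h)"
proof (cases "h = 0")
  case False
  define r where "r = local_norm H x h"
  have r: "0 < r" "r < 1" using local_norm_pos[OF x False] small by (simp_all add: r_def)
  then have "t * r < 1" using t by (smt (verit) mult_left_le_one_le)
  have "\<bar>1 / local_norm H (x + t *\<^sub>R h) h - 1 / local_norm H (x + 0 *\<^sub>R h) h\<bar> \<le> t - 0"
    by (rule inverse_local_norm_lipschitz[of 0 t])
      (use segment_mem_interior[OF x xt] False t in auto)
  then have "(1 - t * r) / r \<le> 1 / local_norm H (x + t *\<^sub>R h) h"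
    using r by (simp add: r_def abs_le_iff diff_divide_distrib)
  then show ?thesis
    using r \<open>t * r < 1\<close> local_norm_pos[OF xt False] by (simp add: r_def field_simps)
qed (simp add: local_norm_def)

lemma barrier_bounded_on_segment:
  assumes x: "x \<in> interior K" and small: "local_norm H x h < 1"
    and t: "0 \<le> t" "t \<le> 1" and xt: "x + t *\<^sub>R h \<in> interior K"
  shows "f (x + t *\<^sub>R h) \<le> f x + \<bar>g x \<bullet> h\<bar> + (local_norm H x h / (1 - local_norm H x h))^2"
proof -
  define r where "r = local_norm H x h"
  have r: "0 \<le> r" "r < 1" using local_norm_nonneg[OF x] small by (simp_all add: r_def)
  have seg: "x + s *\<^sub>R h \<in> interior K" if "0 \<le> s" "s \<le> t" for s
    using segment_mem_interior[OF x xt that] .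
  have hessian_bound: "h \<bullet> (H (x + s *\<^sub>R h) *v h) \<le> (r / (1 - r))^2" if s: "0 \<le> s" "s \<le> t" for s
  proof -
    have "s * r \<le> r" using s t r by (simp add: mult_left_le_one_le)
    have "local_norm H (x + s *\<^sub>R h) h \<le> r / (1 - s * r)"
      using local_norm_along_segment_le[OF x seg[OF s]] s t small by (simp add: r_def)
    also have "\<dots> \<le> r / (1 - r)"
      using \<open>s * r \<le> r\<close> r by (intro divide_left_mono) auto
    finally have "(sqrt (h \<bullet> (H (x + s *\<^sub>R h) *v h)))^2 \<le> (r / (1 - r))^2"
      using local_norm_nonneg[OF seg[OF s]] unfolding local_norm_def by (intro power_mono) auto
    then show ?thesis using hessian_psd[OF seg[OF s]] by simp
  qed
  have "f (x + t *\<^sub>R h) \<le> f (x + 0 *\<^sub>R h) + (g (x + 0 *\<^sub>R h) \<bullet> h) * t + (r / (1 - r))^2 / 2 * t^2"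
  proof (rule le_quadratic_if_second_derivative_le[OF t(1)])
    fix s assume s: "0 \<le> s" "s \<le> t"
    show "((\<lambda>s. f (x + s *\<^sub>R h)) has_real_derivative g (x + s *\<^sub>R h) \<bullet> h) (at s)"
      using has_real_derivative_along_line_gradient[OF gradient[OF seg[OF s]]] .
    show "((\<lambda>s. g (x + s *\<^sub>R h) \<bullet> h) has_real_derivative h \<bullet> (H (x + s *\<^sub>R h) *v h)) (at s)"
      using has_real_derivative_along_line[OF hessian[OF seg[OF s]] bounded_linear_inner_left]
      by (simp add: inner_commute)
    show "h \<bullet> (H (x + s *\<^sub>R h) *v h) \<le> (r / (1 - r))^2" using hessian_bound[OF s] .
  qed
  also have "\<dots> \<le> f x + \<bar>g x \<bullet> h\<bar> + (r / (1 - r))^2"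
  proof -
    have "(g x \<bullet> h) * t \<le> \<bar>g x \<bullet> h\<bar> * 1" using t by (intro mult_mono) auto
    moreover have "(r / (1 - r))^2 / 2 * t^2 \<le> (r / (1 - r))^2 / 2"
      using t by (intro mult_left_le) (auto simp: power_le_one)
    ultimately show ?thesis
      using zero_le_power2[of "r / (1 - r)"]
      by (simp only: scaleR_zero_left add_0_right mult_1_right)
  qed
  finally show ?thesis by (simp add: r_def)
qed

text \<open>Dikin ellipsoid: if the segment from \<open>x\<close> to \<open>x + h\<close> left the interior, it would do so at a
  boundary point of \<open>K\<close>, where \<open>f\<close> blows up; but \<open>f\<close> is bounded along the segment.\<close>
theorem dikin_ellipsoid:
  assumes x: "x \<in> interior K" and small: "local_norm H x h < 1"
  shows "x + h \<in> interior K"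
proof (rule ccontr)
  assume "x + h \<notin> interior K"
  then obtain T where T: "0 < T" "T \<le> 1" "x + T *\<^sub>R h \<notin> interior K"
    and before: "\<And>s. 0 \<le> s \<Longrightarrow> s < T \<Longrightarrow> x + s *\<^sub>R h \<in> interior K"
    using segment_first_exit[OF open_interior x] by blast
  define p where "p = x + T *\<^sub>R h"
  have "h \<noteq> 0" using T(3) x by auto
  have approach: "((\<lambda>s. x + s *\<^sub>R h) \<longlongrightarrow> p) (at_left T)"
    unfolding p_def by (intro tendsto_intros)
  have early: "\<forall>\<^sub>F s in at_left T. s \<in> {0<..<T}" using eventually_at_left_real[OF T(1)] .
  then have inside: "\<forall>\<^sub>F s in at_left T. x + s *\<^sub>R h \<in> interior K - {p}"
    by eventually_elim (use before \<open>h \<noteq> 0\<close> in \<open>auto simp: p_def\<close>)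
  then have "p \<in> K"
    by (intro Lim_in_closed_set[OF K_closed _ _ approach])
      (auto elim!: eventually_mono dest: interior_subset[THEN subsetD])
  then have "p \<in> frontier K" using T(3) K_closed by (simp add: p_def frontier_def)
  moreover have "filterlim (\<lambda>s. x + s *\<^sub>R h) (at p within interior K) (at_left T)"
    using inside approach by (auto simp: filterlim_at elim: eventually_mono)
  ultimately have "filterlim (\<lambda>s. f (x + s *\<^sub>R h)) at_top (at_left T)"
    using filterlim_compose barrier by blast
  then have "\<forall>\<^sub>F s in at_left T. f x + \<bar>g x \<bullet> h\<bar> + (local_norm H x h / (1 - local_norm H x h))^2 + 1
      \<le> f (x + s *\<^sub>R h)"
    by (simp add: filterlim_at_top)
  moreover have "\<forall>\<^sub>F s in at_left T.
      f (x + s *\<^sub>R h) \<le> f x + \<bar>g x \<bullet> h\<bar> + (local_norm H x h / (1 - local_norm H x h))^2"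
    using early by eventually_elim (use barrier_bounded_on_segment[OF x small] before T(2) in auto)
  ultimately have "\<forall>\<^sub>F s in at_left T. False" by eventually_elim simp
  then show False by simp
qed

lemma dual_local_norm_eq_local_norm:
  assumes x: "x \<in> interior K"
  shows "dual_local_norm H x v = local_norm H x (matrix_inv (H x) *v v)"
  by (simp add: dual_local_norm_def local_norm_def matrix_inv_cancel[OF hessian_invertible[OF x]]
      inner_commute)

lemma dual_local_norm_nonneg: "x \<in> interior K \<Longrightarrow> 0 \<le> dual_local_norm H x v"
  by (simp add: dual_local_norm_eq_local_norm local_norm_nonneg)

lemma dual_local_norm_square:
  "x \<in> interior K \<Longrightarrow> v \<bullet> (matrix_inv (H x) *v v) = (dual_local_norm H x v)^2"
  by (simp add: dual_local_norm_def matrix_inv_psd[OF hessian_invertible hessian_psd])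

lemma inner_le_local_norm_dual_local_norm:
  "x \<in> interior K \<Longrightarrow> \<bar>w \<bullet> v\<bar> \<le> local_norm H x w * dual_local_norm H x v"
  unfolding local_norm_def dual_local_norm_def
  by (rule inner_le_form_dual_form[OF hessian_symmetric hessian_psd hessian_invertible])

lemma dual_local_norm_triangle:
  assumes x: "x \<in> interior K"
  shows "dual_local_norm H x (a + b) \<le> dual_local_norm H x a + dual_local_norm H x b"
  unfolding dual_local_norm_def
  by (rule psd_form_sqrt_triangle[OF symmetric_matrix_inv[OF hessian_symmetric hessian_invertible]
        matrix_inv_psd[OF hessian_invertible hessian_psd]]) (use x in auto)

lemma dual_local_norm_scaleR: "dual_local_norm H x (c *\<^sub>R a) = \<bar>c\<bar> * dual_local_norm H x a"
  by (simp only: dual_local_norm_def form_scaleR) (simp add: real_sqrt_mult)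

lemma hessian_sandwich:
  assumes x: "x \<in> interior K" and small: "local_norm H x h < 1" and t: "0 \<le> t" "t \<le> 1"
  shows "(1 - t * local_norm H x h)^2 * (u \<bullet> (H x *v u)) \<le> u \<bullet> (H (x + t *\<^sub>R h) *v u)"
    and "u \<bullet> (H (x + t *\<^sub>R h) *v u) \<le> (u \<bullet> (H x *v u)) / (1 - t * local_norm H x h)^2"
proof -
  define r where "r = local_norm H x h"
  have r: "0 \<le> r" "r < 1" using local_norm_nonneg[OF x] small by (simp_all add: r_def)
  have seg: "x + s *\<^sub>R h \<in> interior K" if "0 \<le> s" "s \<le> 1" for s
    using segment_mem_interior[OF x _ that] dikin_ellipsoid[OF x small] by simp
  define \<psi> where "\<psi> s = u \<bullet> (H (x + s *\<^sub>R h) *v u)" for s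
  define \<psi>' where "\<psi>' s = u \<bullet> (H' (x + s *\<^sub>R h) h *v u)" for s
  have "DERIV \<psi> s :> \<psi>' s" if "0 \<le> s" "s \<le> t" for s
    unfolding \<psi>_def \<psi>'_def
    using has_real_derivative_along_line[OF third_derivative[OF seg]
        bounded_linear_compose[OF bounded_linear_inner_right
          bounded_linear_matrix_vector_mult_left]]
      that t by simp
  moreover have "(1 - s * r) * \<bar>\<psi>' s\<bar> \<le> 2 * r * \<psi> s" if "0 \<le> s" "s \<le> t" for s
  proof -
    have s: "0 \<le> s" "s \<le> 1" using that t by simp_all
    have pos: "1 - s * r > 0" using s r mult_left_le_one_le[of r s] by linarith
    have "\<bar>\<psi>' s\<bar> \<le> 2 * local_norm H (x + s *\<^sub>R h) h * \<psi> s"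
      unfolding \<psi>_def \<psi>'_def by (rule third_derivative_bound[OF seg[OF s]])
    also have "\<dots> \<le> 2 * (r / (1 - s * r)) * \<psi> s"
      using local_norm_along_segment_le[OF x seg[OF s] s small] hessian_psd[OF seg[OF s]]
      by (intro mult_right_mono) (auto simp: r_def \<psi>_def)
    finally show ?thesis using pos by (simp add: field_simps)
  qed
  ultimately show "(1 - t * local_norm H x h)^2 * (u \<bullet> (H x *v u)) \<le> u \<bullet> (H (x + t *\<^sub>R h) *v u)"
    and "u \<bullet> (H (x + t *\<^sub>R h) *v u) \<le> (u \<bullet> (H x *v u)) / (1 - t * local_norm H x h)^2"
    using bounds_from_log_derivative_bound[OF r t, of \<psi> \<psi>'] by (simp_all add: r_def \<psi>_def)
qed

lemma hessian_difference_bound: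
  assumes x: "x \<in> interior K" and small: "local_norm H x h < 1" and s: "0 \<le> s" "s \<le> 1"
  shows "\<bar>w \<bullet> ((H (x + s *\<^sub>R h) - H x) *v v)\<bar>
    \<le> (1 / (1 - s * local_norm H x h)^2 - 1) * local_norm H x w * local_norm H x v"
proof -
  define a where "a = (1 - s * local_norm H x h)^2"
  define D where "D = H (x + s *\<^sub>R h) - H x"
  have xs: "x + s *\<^sub>R h \<in> interior K"
    using segment_mem_interior[OF x _ s] dikin_ellipsoid[OF x small] by simp
  have Dv: "D *v v = H (x + s *\<^sub>R h) *v v - H x *v v" for v
    by (simp add: D_def matrix_vector_mult_diff_rdistrib)
  have "a > 0" "a \<le> 1"
    using s small local_norm_nonneg[OF x] mult_left_le_one_le[of "local_norm H x h" s]
    by (auto simp: a_def power_le_one)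
  moreover have "(1 / a - 1) - (1 - a) = (1 - a)^2 / a"
    using \<open>a > 0\<close> by (simp add: field_simps power2_eq_square)
  ultimately have "1 - a \<le> 1 / a - 1"
    by (metis diff_ge_0_iff_ge divide_nonneg_pos zero_le_power2)
  have "\<bar>u \<bullet> (D *v u)\<bar> \<le> (1 / a - 1) * (u \<bullet> (H x *v u))" for u
  proof -
    let ?q = "u \<bullet> (H x *v u)" and ?q' = "u \<bullet> (H (x + s *\<^sub>R h) *v u)"
    have "a * ?q \<le> ?q'" "?q' \<le> ?q / a" using hessian_sandwich[OF x small s, of u]
      by (simp_all add: a_def)
    moreover have "(1 - a) * ?q \<le> (1 / a - 1) * ?q"
      using \<open>1 - a \<le> 1 / a - 1\<close> hessian_psd[OF x] by (rule mult_right_mono)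
    ultimately have "?q' - ?q \<le> (1 / a - 1) * ?q" "?q - ?q' \<le> (1 / a - 1) * ?q"
      by (simp_all add: left_diff_distrib)
    then show ?thesis by (simp add: Dv inner_diff_right abs_le_iff)
  qed
  moreover have "transpose D = D"
    by (rule symmetric_matrixI) (simp add: Dv inner_diff_right
        symmetric_matrix_inner_commute[OF hessian_symmetric[OF xs]]
        symmetric_matrix_inner_commute[OF hessian_symmetric[OF x]])
  moreover have "0 \<le> 1 / a - 1" using \<open>a > 0\<close> \<open>a \<le> 1\<close> by simp
  ultimately show ?thesis
    using symmetric_form_bound_by_psd[OF hessian_symmetric[OF x] hessian_psd[OF x]]
    by (simp add: D_def a_def local_norm_def)
qed

text \<open>Integrate the Hessian difference bound along the segment from \<open>x\<close> to \<open>x + h\<close>, tested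
  against \<open>w = H(x)\<^sup>-\<^sup>1 e\<close> where \<open>e\<close> is the remainder.\<close>
theorem gradient_remainder_le:
  assumes x: "x \<in> interior K" and small: "local_norm H x h < 1"
  shows "dual_local_norm H x (g (x + h) - g x - H x *v h)
    \<le> (local_norm H x h)^2 / (1 - local_norm H x h)"
proof -
  define r where "r = local_norm H x h"
  have r: "0 \<le> r" "r < 1" using local_norm_nonneg[OF x] small by (simp_all add: r_def)
  have seg: "x + s *\<^sub>R h \<in> interior K" if "0 \<le> s" "s \<le> 1" for s
    using segment_mem_interior[OF x _ that] dikin_ellipsoid[OF x small] by simp
  have pos: "1 - s * r > 0" if "0 \<le> s" "s \<le> 1" for s
    using that r mult_left_le_one_le[of r s] by linarith
  define e where "e = g (x + h) - g x - H x *v h"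
  define w where "w = matrix_inv (H x) *v e"
  define n where "n = dual_local_norm H x e"
  have n: "n = local_norm H x w" "0 \<le> n"
    using dual_local_norm_eq_local_norm[OF x] dual_local_norm_nonneg[OF x]
    by (simp_all add: n_def w_def)
  have "w \<bullet> e = n^2"
    using dual_local_norm_square[OF x, of e] by (simp add: n_def w_def inner_commute)
  define \<psi> where "\<psi> s = w \<bullet> g (x + s *\<^sub>R h) - w \<bullet> g x - s * (w \<bullet> (H x *v h))" for s
  define \<Phi> where "\<Phi> s = n * (1 / (1 - s * r) - 1 - s * r)" for s
  have "\<psi> 1 - \<Phi> 1 \<le> \<psi> 0 - \<Phi> 0"
  proof (rule DERIV_nonpos_imp_nonincreasing[of 0 1])
    fix s :: real assume s: "0 \<le> s" "s \<le> 1"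
    have d\<psi>: "DERIV \<psi> s :> w \<bullet> (H (x + s *\<^sub>R h) *v h) - w \<bullet> (H x *v h)"
      unfolding \<psi>_def
      using has_real_derivative_along_line[OF hessian[OF seg[OF s]]
          bounded_linear_inner_right, of w]
      by (auto intro!: derivative_eq_intros)
    have d\<Phi>: "DERIV \<Phi> s :> (1 / (1 - s * r)^2 - 1) * n * r"
      unfolding \<Phi>_def using pos[OF s]
      by (auto intro!: derivative_eq_intros simp: power2_eq_square field_simps)
    have "\<bar>w \<bullet> ((H (x + s *\<^sub>R h) - H x) *v h)\<bar> \<le> (1 / (1 - s * r)^2 - 1) * n * r"
      using hessian_difference_bound[OF x small s, of w h] n(1) by (simp add: r_def)
    then have "w \<bullet> (H (x + s *\<^sub>R h) *v h) - w \<bullet> (H x *v h) \<le> (1 / (1 - s * r)^2 - 1) * n * r"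
      by (simp add: matrix_vector_mult_diff_rdistrib inner_diff_right)
    then show "\<exists>y. DERIV (\<lambda>s. \<psi> s - \<Phi> s) s :> y \<and> y \<le> 0"
      using DERIV_diff[OF d\<psi> d\<Phi>] by auto
  qed simp
  moreover have "\<psi> 1 = n^2" using \<open>w \<bullet> e = n^2\<close> by (simp add: \<psi>_def e_def inner_diff_right)
  moreover have "\<Phi> 1 = n * (r^2 / (1 - r))"
    using pos[of 1] by (simp add: \<Phi>_def field_simps power2_eq_square)
  ultimately have "n * n \<le> n * (r^2 / (1 - r))" by (simp add: \<psi>_def \<Phi>_def power2_eq_square)
  then have "n \<le> r^2 / (1 - r)"
    using n(2) r
    by (cases "n = 0") (auto simp: mult_le_cancel_left_pos simp del: times_divide_eq_right)
  then show ?thesis by (simp add: n_def e_def r_def)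
qed

theorem dual_local_norm_shift_le:
  assumes x: "x \<in> interior K" and small: "local_norm H x h < 1"
  shows "dual_local_norm H (x + h) v \<le> dual_local_norm H x v / (1 - local_norm H x h)"
proof -
  define r where "r = local_norm H x h"
  define y where "y = x + h"
  have y: "y \<in> interior K" using dikin_ellipsoid[OF x small] by (simp add: y_def)
  define w where "w = matrix_inv (H y) *v v"
  define ny where "ny = dual_local_norm H y v"
  have ny: "ny = local_norm H y w" "0 \<le> ny"
    using dual_local_norm_eq_local_norm[OF y] dual_local_norm_nonneg[OF y]
    by (simp_all add: ny_def w_def)
  have "w \<bullet> v = ny^2"
    using dual_local_norm_square[OF y, of v] by (simp add: ny_def w_def inner_commute)
  have "(1 - r)^2 * (local_norm H x w)^2 \<le> ny^2"
    using hessian_sandwich(1)[OF x small, of 1 w] hessian_psd[OF x, of w] hessian_psd[OF y, of w] ny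
    by (simp add: r_def y_def local_norm_def)
  then have "(1 - r) * local_norm H x w \<le> ny"
    using small local_norm_nonneg[OF x] ny(2)
    by (simp add: r_def power_mult_distrib[symmetric] power2_le_iff_abs_le)
  have "ny^2 \<le> local_norm H x w * dual_local_norm H x v"
    using inner_le_local_norm_dual_local_norm[OF x, of w v] \<open>w \<bullet> v = ny^2\<close> by simp
  also have "\<dots> \<le> ny / (1 - r) * dual_local_norm H x v"
    using \<open>(1 - r) * local_norm H x w \<le> ny\<close> small dual_local_norm_nonneg[OF x]
    by (intro mult_right_mono) (simp_all add: r_def field_simps)
  finally have "ny * ny \<le> ny * (dual_local_norm H x v / (1 - r))" by (simp add: power2_eq_square)
  then have "ny \<le> dual_local_norm H x v / (1 - r)"
    using ny(2) small dual_local_norm_nonneg[OF x, of v]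
    by (cases "ny = 0") (auto simp: r_def mult_le_cancel_left_pos simp del: times_divide_eq_right)
  then show ?thesis by (simp add: ny_def y_def r_def)
qed

corollary gradient_remainder_shifted_le:
  assumes x: "x \<in> interior K" and small: "local_norm H x h < 1"
  shows "dual_local_norm H (x + h) (g (x + h) - g x - H x *v h)
    \<le> (local_norm H x h)^2 / (1 - local_norm H x h)^2"
proof -
  have "dual_local_norm H (x + h) (g (x + h) - g x - H x *v h)
      \<le> dual_local_norm H x (g (x + h) - g x - H x *v h) / (1 - local_norm H x h)"
    by (rule dual_local_norm_shift_le[OF x small])
  also have "\<dots> \<le> ((local_norm H x h)^2 / (1 - local_norm H x h)) / (1 - local_norm H x h)"
    using gradient_remainder_le[OF x small] small by (intro divide_right_mono) simp_all
  finally show ?thesis by (simp add: power2_eq_square)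
qed

theorem mem_interior_dual_cone:
  assumes y: "y \<in> interior K" and close: "dual_local_norm H y (s + \<mu> *\<^sub>R g y) < \<mu>"
  shows "s \<in> interior (dual_cone K)"
proof -
  define \<delta> where "\<delta> = \<mu> - dual_local_norm H y (s + \<mu> *\<^sub>R g y)"
  have "\<delta> > 0" "\<mu> > 0"
    using close dual_local_norm_nonneg[OF y, of "s + \<mu> *\<^sub>R g y"] by (simp_all add: \<delta>_def)
  obtain l where l: "l > 0" "\<And>v. l * (norm v)^2 \<le> v \<bullet> (H y *v v)"
    using pd_form_coercive[OF hessian_pos[OF y]] by blast
  have "0 \<le> s' \<bullet> z" if s': "dist s s' < \<delta> * sqrt l" and z: "z \<in> K" for s' z
  proof -
    define N where "N = local_norm H y z"
    have "sqrt l * norm z \<le> N"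
      using real_sqrt_le_mono[OF l(2)[of z]] l(1) by (simp add: N_def local_norm_def real_sqrt_mult)
    have "\<bar>(s' - s) \<bullet> z\<bar> \<le> norm (s' - s) * norm z" by (rule Cauchy_Schwarz_ineq2)
    also have "\<dots> \<le> (\<delta> * sqrt l) * norm z"
      using s' by (intro mult_right_mono) (auto simp: dist_norm norm_minus_commute)
    also have "\<dots> \<le> \<delta> * N" using \<open>sqrt l * norm z \<le> N\<close> \<open>\<delta> > 0\<close> by (simp add: mult.assoc)
    finally have "- ((s' - s) \<bullet> z) \<le> \<delta> * N" by simp
    moreover have "- ((s + \<mu> *\<^sub>R g y) \<bullet> z) \<le> (\<mu> - \<delta>) * N"
      using abs_le_D2[OF inner_le_local_norm_dual_local_norm[OF y, of z "s + \<mu> *\<^sub>R g y"]]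
      by (simp add: N_def \<delta>_def inner_commute mult.commute)
    moreover have "\<mu> * N \<le> - (\<mu> * (g y \<bullet> z))"
      using mult_left_mono[OF local_norm_le_neg_gradient_inner[OF y z], of \<mu>] \<open>\<mu> > 0\<close>
      by (simp add: N_def)
    moreover have "s' \<bullet> z = (s + \<mu> *\<^sub>R g y) \<bullet> z - \<mu> * (g y \<bullet> z) + (s' - s) \<bullet> z"
      by (simp add: inner_add_left inner_diff_left)
    ultimately show ?thesis by (simp add: left_diff_distrib)
  qed
  then have "ball s (\<delta> * sqrt l) \<subseteq> dual_cone K" by (auto simp: dual_cone_def)
  then show ?thesis using mem_interior \<open>\<delta> > 0\<close> l(1) by (metis mult_pos_pos real_sqrt_gt_0_iff)
qed

end

section \<open>The short-step Newton iteration\<close>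

lemma kernel_orthogonal_range:
  fixes A :: "real^'n^'m"
  assumes "A *v dx = 0" and "transpose A *v dy + ds = 0"
  shows "dx \<bullet> ds = 0"
proof -
  have "ds = - (transpose A *v dy)" using assms(2) by (simp add: eq_neg_iff_add_eq_0 add.commute)
  then show ?thesis
    using assms(1) dot_lmul_matrix[of dy A dx] by (simp add: inner_commute)
qed

text \<open>For \<open>r \<le> \<eta> \<le> 1/4\<close> one has \<open>r\<^sup>2 / (1 - r)\<^sup>2 \<le> (4/9) \<eta>\<close>, and \<open>\<theta> (\<surd>\<nu> + \<eta>) \<le> \<eta> / 2\<close>
  for \<open>\<theta> = (\<eta> / 2) / (\<surd>\<nu> + 1)\<close>.\<close>
lemma centrality_arith:
  fixes r \<eta> \<nu> E :: real
  assumes r: "0 \<le> r" "r \<le> \<eta>" and \<eta>: "0 < \<eta>" "\<eta> \<le> 1/4" and "0 \<le> \<nu>"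
    and E: "E \<le> r^2 / (1 - r)^2"
  shows "E + (\<eta> / 2) / (sqrt \<nu> + 1) * sqrt \<nu> \<le> \<eta> * (1 - (\<eta> / 2) / (sqrt \<nu> + 1))"
proof -
  define \<theta> where "\<theta> = (\<eta> / 2) / (sqrt \<nu> + 1)"
  have "r / (1 - r) \<le> \<eta> / (1 - \<eta>)" using r \<eta> by (simp add: field_simps)
  also have "\<dots> \<le> (4/3) * \<eta>" using \<eta> by (simp add: field_simps)
  finally have "r / (1 - r) \<le> (4/3) * \<eta>" .
  then have "r^2 / (1 - r)^2 \<le> ((4/3) * \<eta>)^2"
    using r \<eta> by (simp add: power_divide[symmetric] power_mono)
  also have "\<dots> \<le> (4/9) * \<eta>" using \<eta> by (simp add: power2_eq_square)
  finally have "E \<le> (4/9) * \<eta>" using E by linarith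
  moreover have "\<theta> * sqrt \<nu> + \<theta> = \<eta> / 2"
  proof -
    have "sqrt \<nu> + 1 \<noteq> 0" using real_sqrt_ge_zero[OF \<open>0 \<le> \<nu>\<close>] by linarith
    then have "\<theta> * (sqrt \<nu> + 1) = \<eta> / 2" using \<theta>_def nonzero_eq_divide_eq by metis
    then show ?thesis by (simp add: distrib_left)
  qed
  moreover have "\<eta> * \<theta> \<le> \<theta>"
    using \<eta> \<open>0 \<le> \<nu>\<close> mult_right_mono[of \<eta> 1 \<theta>] by (simp add: \<theta>_def)
  ultimately have "E + \<theta> * sqrt \<nu> \<le> \<eta> - \<eta> * \<theta>" using \<eta> by linarith
  then show ?thesis unfolding \<theta>_def[symmetric] by (simp add: right_diff_distrib)
qed

context lhscb
begin

lemma newton_step_local_norm_le: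
  assumes x: "x \<in> interior K" and "\<tau> > 0" and "dx \<bullet> ds = 0"
    and newton: "\<tau> *\<^sub>R (H x *v dx) + ds = - (s + \<tau> *\<^sub>R g x)"
  shows "\<tau> * local_norm H x dx \<le> dual_local_norm H x (s + \<tau> *\<^sub>R g x)"
proof -
  note cancel = matrix_inv_cancel[OF hessian_invertible[OF x]]
  define v where "v = matrix_inv (H x) *v ds + \<tau> *\<^sub>R dx"
  have "H x *v v = - (s + \<tau> *\<^sub>R g x)"
    using newton
    by (simp add: v_def matrix_vector_right_distrib matrix_vector_mult_scaleR cancel add.commute)
  then have "dual_local_norm H x (s + \<tau> *\<^sub>R g x) = dual_local_norm H x (H x *v v)"
    using dual_local_norm_scaleR[of x "- 1" "H x *v v"] by (simp add: add.commute)
  also have "\<dots> = local_norm H x v" by (simp add: dual_local_norm_eq_local_norm[OF x] cancel)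
  finally have norm_eq: "dual_local_norm H x (s + \<tau> *\<^sub>R g x) = local_norm H x v" .
  have "(matrix_inv (H x) *v ds) \<bullet> (H x *v dx) = dx \<bullet> ds"
    using symmetric_matrix_inner_commute[OF hessian_symmetric[OF x], of "matrix_inv (H x) *v ds" dx]
    by (simp add: cancel)
  then have "v \<bullet> (H x *v v) = (matrix_inv (H x) *v ds) \<bullet> (H x *v (matrix_inv (H x) *v ds))
      + \<tau>^2 * (dx \<bullet> (H x *v dx))"
    using symmetric_form_add_scaleR[OF hessian_symmetric[OF x]] \<open>dx \<bullet> ds = 0\<close> by (simp add: v_def)
  then have "(\<tau> * local_norm H x dx)^2 \<le> (local_norm H x v)^2"
    using hessian_psd[OF x] by (simp add: local_norm_def power_mult_distrib)
  then show ?thesis using local_norm_nonneg[OF x, of v] norm_eq by (metis power2_le_imp_le)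
qed

theorem newton_step_centrality:
  assumes x: "x \<in> interior K" and \<tau>: "\<tau> > 0" and \<eta>: "0 < \<eta>" "\<eta> \<le> 1/4"
    and central: "dual_local_norm H x (s + \<tau> *\<^sub>R g x) \<le> \<eta> * \<tau>"
    and "dx \<bullet> ds = 0" and newton: "\<tau> *\<^sub>R (H x *v dx) + ds = - (s + \<tau> *\<^sub>R g x)"
  defines "\<tau>' \<equiv> (1 - (\<eta> / 2) / (sqrt \<nu> + 1)) * \<tau>"
  shows "x + dx \<in> interior K" and "s + ds \<in> interior (dual_cone K)"
    and "dual_local_norm H (x + dx) (s + ds + \<tau>' *\<^sub>R g (x + dx)) \<le> \<eta> * \<tau>'"
proof -
  define r where "r = local_norm H x dx"
  define \<theta> where "\<theta> = (\<eta> / 2) / (sqrt \<nu> + 1)"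
  have "\<tau> * r \<le> \<tau> * \<eta>"
    using newton_step_local_norm_le[OF x \<tau> \<open>dx \<bullet> ds = 0\<close> newton] central
    by (simp add: r_def mult.commute)
  then have r: "0 \<le> r" "r \<le> \<eta>" "r < 1"
    using \<tau> \<eta> local_norm_nonneg[OF x] by (simp_all add: r_def)
  then show x': "x + dx \<in> interior K" using dikin_ellipsoid[OF x] by (simp add: r_def)
  define e where "e = g (x + dx) - g x - H x *v dx"
  have remainder: "dual_local_norm H (x + dx) e \<le> r^2 / (1 - r)^2"
    using gradient_remainder_shifted_le[OF x] r by (simp add: e_def r_def)
  have residual: "s + ds + \<tau>' *\<^sub>R g (x + dx) = \<tau> *\<^sub>R e + (- (\<theta> * \<tau>)) *\<^sub>R g (x + dx)"
    using newton by (simp add: e_def \<tau>'_def \<theta>_def algebra_simps eq_neg_iff_add_eq_0)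
  have "dual_local_norm H (x + dx) (s + ds + \<tau>' *\<^sub>R g (x + dx))
      \<le> dual_local_norm H (x + dx) (\<tau> *\<^sub>R e)
        + dual_local_norm H (x + dx) ((- (\<theta> * \<tau>)) *\<^sub>R g (x + dx))"
    unfolding residual by (rule dual_local_norm_triangle[OF x'])
  also have "\<dots> = \<tau> * dual_local_norm H (x + dx) e + \<theta> * \<tau> * sqrt \<nu>"
    using \<tau> \<eta> nu_nonneg dual_local_norm_gradient[OF x'] dual_local_norm_scaleR[of "x + dx" \<tau> e]
      dual_local_norm_scaleR[of "x + dx" "- (\<theta> * \<tau>)" "g (x + dx)"]
    by (simp add: \<theta>_def abs_mult)
  also have "\<dots> \<le> \<eta> * \<tau>'"
    using mult_left_mono[OF centrality_arith[OF r(1,2) \<eta> nu_nonneg remainder] less_imp_le[OF \<tau>]]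
    by (simp add: \<tau>'_def \<theta>_def algebra_simps)
  finally show bound: "dual_local_norm H (x + dx) (s + ds + \<tau>' *\<^sub>R g (x + dx)) \<le> \<eta> * \<tau>'" .
  have "1 \<le> sqrt \<nu> + 1" using real_sqrt_ge_zero[OF nu_nonneg] by linarith
  then have "\<theta> \<le> (\<eta> / 2) / 1" unfolding \<theta>_def using \<eta> by (intro frac_le) auto
  then have "\<theta> < 1" using \<eta> by simp
  moreover have "\<tau>' = (1 - \<theta>) * \<tau>" by (simp add: \<tau>'_def \<theta>_def)
  ultimately have "(1 - \<eta>) * \<tau>' > 0" using \<tau> \<eta> by simp
  then have "dual_local_norm H (x + dx) (s + ds + \<tau>' *\<^sub>R g (x + dx)) < \<tau>'"
    using bound by (simp add: algebra_simps)
  then show "s + ds \<in> interior (dual_cone K)"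
    using mem_interior_dual_cone[OF x'] by (simp add: add.assoc)
qed

end

text \<open>The rank hypothesis only guarantees that the Newton system is solvable.\<close>
theorem lemma2p2:
  fixes K :: "(real^'n) set" and f :: "real^'n \<Rightarrow> real"
    and g :: "real^'n \<Rightarrow> real^'n" and H :: "real^'n \<Rightarrow> real^'n^'n" and \<nu> :: real
    and A :: "real^'n^'m" and b :: "real^'m" and c :: "real^'n"
    and \<tau> \<eta> :: real and x dx s ds :: "real^'n" and y dy :: "real^'m"
  assumes "proper_cone K"
    and "LHSCB K f g H \<nu>"
    and "rank A = CARD('m)"
    and "\<tau> > 0" and "0 < \<eta>" and "\<eta> \<le> 1/4"
    and "(x, y, s) \<in> nbhd K g H A b c \<eta> \<tau>"
    and "A *v dx = 0"
    and "transpose A *v dy + ds = 0"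
    and "\<tau> *\<^sub>R (H x *v dx) + ds = - (s + \<tau> *\<^sub>R g x)"
  shows "(x + dx, y + dy, s + ds)
           \<in> nbhd K g H A b c \<eta> ((1 - (\<eta> / 2) / (sqrt \<nu> + 1)) * \<tau>)"
proof -
  obtain H' where "lhscb K f g H H' \<nu>" using LHSCB_imp_lhscb[OF assms(1,2)] .
  then interpret lhscb K f g H H' \<nu> .
  have x: "x \<in> interior K" and feasible: "A *v x = b" "transpose A *v y + s = c"
    and central: "dual_local_norm H x (s + \<tau> *\<^sub>R g x) \<le> \<eta> * \<tau>"
    using assms(7) by (auto simp: nbhd_def strictly_feasible_def)
  have "dx \<bullet> ds = 0" using kernel_orthogonal_range[OF assms(8,9)] .
  note step = newton_step_centrality[OF x assms(4-6) central this assms(10)]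
  have "A *v (x + dx) = b" "transpose A *v (y + dy) + (s + ds) = c"
    using feasible assms(8,9) by (simp_all add: algebra_simps)
  then show ?thesis using step by (simp add: nbhd_def strictly_feasible_def)
qed

end
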